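(* Let $g_1,g_2\in\mathcal{O}_3=\mathbb{R}\{t,x_1,x_2\}$ vanish at the origin, suppose $V(g_1,g_2)$ is a curve having an algebraically isolated singularity at the origin and $\dim_{\mathbb{R}}\mathcal{O}_3/\langle t,g_1,g_2\rangle<\infty$. Put $g_i'(t,x)=g_i(t^2,x)$, $i=1,2$. Then $\dim_{\mathbb{R}}\mathcal{O}_3/\langle t,g_1',g_2'\rangle<\infty$ and $V(g_1',g_2')$ is a curve having an algebraically isolated singularity at the origin.
   Context: $\mathcal{O}_3$ is the ring of real analytic germs at the origin in $(t,x_1,x_2)$. For $w_1,\dots,w_m\in\mathcal{O}_3$ vanishing at $\mathbf 0$, let $W$ be the ideal generated by $w_1,\dots,w_m$ and all $2\times2$ minors of the Jacobian matrix of $(w_1,\ldots,w_m)$ with respect to $(t,x_1,x_2)$; $V(w_1,\dots,w_m)$ is a curve having an algebraically isolated singularity at the origin if $W$ is proper and $\dim_{\mathbb{R}}\mathcal{O}_3/W<\infty$. *)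

theory Defs
  imports "HOL-Analysis.Analysis"
begin

text \<open>A germ of O_3 is represented by a
function R^3 -> R that is real analytic at the origin; two functions define the same
germ iff they agree on a neighbourhood of the origin.\<close>

definition analytic_at0 :: "(real \<times> real \<times> real \<Rightarrow> real) \<Rightarrow> bool" where
  "analytic_at0 f \<longleftrightarrow>
     (\<exists>r>0. \<exists>c :: nat \<times> nat \<times> nat \<Rightarrow> real.
        \<forall>t x1 x2. \<bar>t\<bar> < r \<and> \<bar>x1\<bar> < r \<and> \<bar>x2\<bar> < r \<longrightarrow>
          ((\<lambda>(i, j, k). c (i, j, k) * t ^ i * x1 ^ j * x2 ^ k) has_sum f (t, x1, x2)) UNIV)"

definition germ_eq :: "(real \<times> real \<times> real \<Rightarrow> real) \<Rightarrow> (real \<times> real \<times> real \<Rightarrow> real) \<Rightarrow> bool" where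
  "germ_eq f g \<longleftrightarrow> (\<forall>\<^sub>F p in nhds (0, 0, 0). f p = g p)"

definition in_ideal :: "(real \<times> real \<times> real \<Rightarrow> real) list \<Rightarrow> (real \<times> real \<times> real \<Rightarrow> real) \<Rightarrow> bool" where
  "in_ideal ws h \<longleftrightarrow>
     (\<exists>a :: nat \<Rightarrow> real \<times> real \<times> real \<Rightarrow> real.
        (\<forall>i < length ws. analytic_at0 (a i)) \<and>
        germ_eq h (\<lambda>p. \<Sum>i<length ws. a i p * (ws ! i) p))"

definition proper_ideal :: "(real \<times> real \<times> real \<Rightarrow> real) list \<Rightarrow> bool" where
  "proper_ideal ws \<longleftrightarrow> \<not> in_ideal ws (\<lambda>_. 1)"

text \<open>dim_R O_3 / <ws> < infinity: the quotient is spanned by the classes of finitely many germs.\<close>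
definition finite_codim :: "(real \<times> real \<times> real \<Rightarrow> real) list \<Rightarrow> bool" where
  "finite_codim ws \<longleftrightarrow>
     (\<exists>E. finite E \<and> (\<forall>e\<in>E. analytic_at0 e) \<and>
        (\<forall>h. analytic_at0 h \<longrightarrow>
           (\<exists>u :: (real \<times> real \<times> real \<Rightarrow> real) \<Rightarrow> real.
              in_ideal ws (\<lambda>p. h p - (\<Sum>e\<in>E. u e * e p)))))"

text \<open>Partial derivative with respect to coordinate k (0 = t, 1 = x1, 2 = x2).\<close>
definition pdiff :: "nat \<Rightarrow> (real \<times> real \<times> real \<Rightarrow> real) \<Rightarrow> real \<times> real \<times> real \<Rightarrow> real" where
  "pdiff k f = (\<lambda>(t, x1, x2).
      if k = 0 then deriv (\<lambda>s. f (s, x1, x2)) t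
      else if k = 1 then deriv (\<lambda>s. f (t, s, x2)) x1
      else deriv (\<lambda>s. f (t, x1, s)) x2)"

definition jac_minors :: "(real \<times> real \<times> real \<Rightarrow> real) list \<Rightarrow> (real \<times> real \<times> real \<Rightarrow> real) list" where
  "jac_minors ws =
     [(\<lambda>p. pdiff k (ws ! i) p * pdiff l (ws ! j) p - pdiff l (ws ! i) p * pdiff k (ws ! j) p).
        i \<leftarrow> [0..<length ws], j \<leftarrow> [0..<length ws], i < j, k \<leftarrow> [0..<3], l \<leftarrow> [0..<3], k < l]"

text \<open>V(ws) is a curve with an algebraically isolated singularity at the origin:
the ideal W generated by ws and the 2x2 Jacobian minors is proper and of finite codimension.\<close>
definition curve_ais :: "(real \<times> real \<times> real \<Rightarrow> real) list \<Rightarrow> bool" where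
  "curve_ais ws \<longleftrightarrow> proper_ideal (ws @ jac_minors ws) \<and> finite_codim (ws @ jac_minors ws)"

end

theory Submission
  imports Defs
begin

text \<open>Substituting t^2 for t multiplies the Jacobian minors of (g1, g2) that involve the
  t-derivative by 2t and leaves the other generators unchanged, so t \<cdot> w(t^2, x) lies in the
  ideal W' of (g1', g2') for every w in the ideal W of (g1, g2). Writing a germ as
  k = ke(t^2, x) + t \<cdot> ko(t^2, x), the germ t \<cdot> k is therefore congruent modulo W' to a
  combination of the t \<cdot> e(t^2, x) and t^2 \<cdot> e(t^2, x), with e running through a finite spanning
  set of O_3/W. Since t divides g_i - g_i', the ideals (t, g1, g2) and (t, g1', g2') coincide, and a
  spanning set of their quotient accounts for the remaining part of any germ. Finally W' is
  proper because all its generators vanish at the origin: the x-minor does, as otherwise it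
  would be a unit in the proper ideal W.\<close>

lemma real_summable_on_absI: "(\<lambda>n. \<bar>f n\<bar>) summable_on A \<Longrightarrow> (f :: _ \<Rightarrow> real) summable_on A"
  using summable_on_iff_abs_summable_on_real[of f A] by simp

lemma has_sum_mult_family:
  fixes f g :: "'a \<Rightarrow> real"
  assumes "(f has_sum F) UNIV" "(g has_sum G) UNIV"
    and "(\<lambda>a. \<bar>f a\<bar>) summable_on UNIV" "(\<lambda>b. \<bar>g b\<bar>) summable_on UNIV"
  shows "((\<lambda>(a, b). f a * g b) has_sum (F * G)) UNIV"
proof -
  have s1: "(\<lambda>(a, b). \<bar>f a\<bar> * \<bar>g b\<bar>) summable_on Sigma UNIV (\<lambda>_. UNIV)"
  proof (rule summable_on_SigmaI[where g = "\<lambda>a. \<bar>f a\<bar> * infsum (\<lambda>b. \<bar>g b\<bar>) UNIV"])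
    fix a :: 'a
    show "((\<lambda>b. case (a, b) of (a, b) \<Rightarrow> \<bar>f a\<bar> * \<bar>g b\<bar>) has_sum \<bar>f a\<bar> * infsum (\<lambda>b. \<bar>g b\<bar>) UNIV) UNIV"
      using has_sum_cmult_right[OF has_sum_infsum[OF assms(4)], of "\<bar>f a\<bar>"] by simp
  next
    show "(\<lambda>a. \<bar>f a\<bar> * infsum (\<lambda>b. \<bar>g b\<bar>) UNIV) summable_on UNIV"
      by (rule summable_on_cmult_left[OF assms(3)])
  qed auto
  have s2: "(\<lambda>(a, b). f a * g b) summable_on Sigma UNIV (\<lambda>_. UNIV)"
  proof (rule real_summable_on_absI)
    show "(\<lambda>x. \<bar>case x of (a, b) \<Rightarrow> f a * g b\<bar>) summable_on Sigma UNIV (\<lambda>_. UNIV)"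
      using s1 by (simp add: case_prod_unfold abs_mult)
  qed
  have "((\<lambda>(a, b). f a * g b) has_sum (F * G)) (Sigma UNIV (\<lambda>_. UNIV))"
  proof (rule has_sum_SigmaI[where g = "\<lambda>a. f a * G"])
    show "((\<lambda>b. case (a, b) of (a, b) \<Rightarrow> f a * g b) has_sum f a * G) UNIV" for a
      using has_sum_cmult_right[OF assms(2), of "f a"] by simp
    show "((\<lambda>a. f a * G) has_sum F * G) UNIV" by (rule has_sum_cmult_left[OF assms(1)])
  qed (use s2 in auto)
  then show ?thesis by simp
qed

lemma has_sum_reindex_inj:
  assumes "inj h" "\<And>n. n \<notin> range h \<Longrightarrow> g n = 0" "((\<lambda>n. g (h n)) has_sum s) UNIV"
  shows "(g has_sum s) UNIV"
proof -
  have "(g has_sum s) (range h)"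
    using has_sum_reindex[of h UNIV g s] assms(1,3) by (simp add: o_def)
  then show ?thesis
    using has_sum_cong_neutral[of "range h" UNIV g g s] assms(2) by auto
qed

lemma has_sum_restrict_range:
  assumes "inj h" "((\<lambda>n. g (h n)) has_sum s) UNIV"
  shows "((\<lambda>n. if n \<in> range h then g n else 0) has_sum s) UNIV"
proof (rule has_sum_reindex_inj[OF assms(1)])
  show "((\<lambda>n. if h n \<in> range h then g (h n) else 0) has_sum s) UNIV" using assms(2) by simp
qed auto

lemma Suc_mult_power_bounded:
  assumes "0 \<le> q" "q < (1::real)"
  obtains B where "B > 0" "\<And>i. real (Suc i) * q ^ i \<le> B"
proof -
  have nq: "norm q < 1" using assms by simp
  have "(\<lambda>n. of_nat n * q ^ n) \<longlonglongrightarrow> 0" by (rule powser_times_n_limit_0[OF nq])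
  then have "Bseq (\<lambda>n. of_nat n * q ^ n)" by (rule convergent_imp_Bseq[OF convergentI])
  then obtain K where K: "K > 0" "\<And>n. norm (of_nat n * q ^ n) \<le> K" unfolding Bseq_def by blast
  show ?thesis
  proof (rule that[of "K + 1"])
    fix i
    have "real i * q ^ i \<le> K" using K(2)[of i] assms by simp
    moreover have "q ^ i \<le> 1" using assms by (simp add: power_le_one)
    ultimately show "real (Suc i) * q ^ i \<le> K + 1" by (simp add: distrib_right)
  qed (use K in simp)
qed

subsection \<open>Germs as convergent power series on cubes\<close>

definition cube :: "real \<Rightarrow> (real \<times> real \<times> real) set" where
  "cube r = {p. \<bar>fst p\<bar> < r \<and> \<bar>fst (snd p)\<bar> < r \<and> \<bar>snd (snd p)\<bar> < r}"

lemma in_cube [simp]: "(t, x, y) \<in> cube r \<longleftrightarrow> \<bar>t\<bar> < r \<and> \<bar>x\<bar> < r \<and> \<bar>y\<bar> < r"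
  by (simp add: cube_def)

lemma cube_mono: "r' \<le> r \<Longrightarrow> p \<in> cube r' \<Longrightarrow> p \<in> cube r"
  by (cases p) auto

definition monom3 :: "nat \<times> nat \<times> nat \<Rightarrow> real \<times> real \<times> real \<Rightarrow> real" where
  "monom3 n p = fst p ^ fst n * fst (snd p) ^ fst (snd n) * snd (snd p) ^ snd (snd n)"

lemma monom3_Pair [simp]: "monom3 (i, j, k) (t, x, y) = t ^ i * x ^ j * y ^ k"
  by (simp add: monom3_def)

definition powser_conv :: "(nat \<times> nat \<times> nat \<Rightarrow> real) \<Rightarrow> real \<Rightarrow> bool" where
  "powser_conv c r \<longleftrightarrow> (\<forall>p\<in>cube r. (\<lambda>n. c n * monom3 n p) summable_on UNIV)"

definition powser :: "(nat \<times> nat \<times> nat \<Rightarrow> real) \<Rightarrow> real \<times> real \<times> real \<Rightarrow> real" where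
  "powser c p = (\<Sum>\<^sub>\<infinity>n. c n * monom3 n p)"

lemma powser_has_sum:
  "powser_conv c r \<Longrightarrow> p \<in> cube r \<Longrightarrow> ((\<lambda>n. c n * monom3 n p) has_sum powser c p) UNIV"
  unfolding powser_conv_def powser_def by (intro has_sum_infsum) blast

lemma powser_eqI: "((\<lambda>n. c n * monom3 n p) has_sum s) UNIV \<Longrightarrow> powser c p = s"
  unfolding powser_def by (rule infsumI)

lemma powser_convI:
  "(\<And>p. p \<in> cube r \<Longrightarrow> ((\<lambda>n. c n * monom3 n p) has_sum s p) UNIV) \<Longrightarrow> powser_conv c r"
  unfolding powser_conv_def using has_sum_imp_summable by blast

lemma powser_conv_mono: "powser_conv c r \<Longrightarrow> r' \<le> r \<Longrightarrow> powser_conv c r'"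
  unfolding powser_conv_def using cube_mono by blast

lemma powser_conv_abs_summable:
  "powser_conv c r \<Longrightarrow> p \<in> cube r \<Longrightarrow> (\<lambda>n. \<bar>c n * monom3 n p\<bar>) summable_on UNIV"
  unfolding powser_conv_def
  using summable_on_iff_abs_summable_on_real[of "\<lambda>n. c n * monom3 n p" UNIV] by auto

lemma powser_conv_dominated:
  assumes "powser_conv c r" "inj h"
    and "\<And>p. p \<in> cube r' \<Longrightarrow>
           \<exists>q\<in>cube r. \<exists>K. \<forall>n. \<bar>d n * monom3 n p\<bar> \<le> K * \<bar>c (h n) * monom3 (h n) q\<bar>"
  shows "powser_conv d r'"
  unfolding powser_conv_def
proof
  fix p assume "p \<in> cube r'"
  then obtain q K where q: "q \<in> cube r"
    and K: "\<And>n. \<bar>d n * monom3 n p\<bar> \<le> K * \<bar>c (h n) * monom3 (h n) q\<bar>"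
    using assms(3) by blast
  have "(\<lambda>m. \<bar>c m * monom3 m q\<bar>) summable_on range h"
    using summable_on_subset[OF powser_conv_abs_summable[OF assms(1) q]] by simp
  then have "(\<lambda>n. \<bar>c (h n) * monom3 (h n) q\<bar>) summable_on UNIV"
    using summable_on_reindex[of h UNIV "\<lambda>m. \<bar>c m * monom3 m q\<bar>"] assms(2)
    by (simp add: o_def)
  then have "(\<lambda>n. \<bar>d n * monom3 n p\<bar>) summable_on UNIV"
    by (rule summable_on_comparison_test[OF summable_on_cmult_right]) (use K in auto)
  then show "(\<lambda>n. d n * monom3 n p) summable_on UNIV"
    by (rule real_summable_on_absI)
qed

lemma eventually_nhds0_iff_cube:
  "(\<forall>\<^sub>F p in nhds (0, 0, 0). P p) \<longleftrightarrow> (\<exists>r>0. \<forall>p\<in>cube r. P p)"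
proof
  assume "\<forall>\<^sub>F p in nhds (0, 0, 0). P p"
  then obtain d where d: "d > 0" "\<And>p. dist p (0, 0, 0) < d \<Longrightarrow> P p"
    unfolding eventually_nhds_metric by blast
  have "P (t, x, y)" if "(t, x, y) \<in> cube (d / 3)" for t x y
  proof (rule d(2))
    have "dist (t, x, y) (0, 0, 0) \<le> \<bar>t\<bar> + dist (x, y) (0, 0)"
      using sqrt_sum_squares_le_sum_abs[of t "dist (x, y) (0, 0)"]
      by (simp add: dist_Pair_Pair dist_real_def)
    also have "dist (x, y) (0, 0) \<le> \<bar>x\<bar> + \<bar>y\<bar>"
      using sqrt_sum_squares_le_sum_abs[of x y] by (simp add: dist_Pair_Pair dist_real_def)
    finally show "dist (t, x, y) (0, 0, 0) < d" using that by simp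
  qed
  then show "\<exists>r>0. \<forall>p\<in>cube r. P p"
    using d(1) by (intro exI[of _ "d / 3"]) auto
next
  assume "\<exists>r>0. \<forall>p\<in>cube r. P p"
  then obtain r where r: "r > 0" "\<And>p. p \<in> cube r \<Longrightarrow> P p" by blast
  have "P p" if "dist p (0, 0, 0) < r" for p :: "real \<times> real \<times> real"
  proof (rule r(2))
    have "dist (fst p) 0 \<le> dist p (0, 0, 0)" "dist (snd p) (0, 0) \<le> dist p (0, 0, 0)"
      "dist (fst (snd p)) 0 \<le> dist (snd p) (0, 0)" "dist (snd (snd p)) 0 \<le> dist (snd p) (0, 0)"
      using dist_fst_le[of p "(0, 0, 0)"] dist_snd_le[of p "(0, 0, 0)"]
        dist_fst_le[of "snd p" "(0, 0)"] dist_snd_le[of "snd p" "(0, 0)"] by simp_all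
    then show "p \<in> cube r"
      using that unfolding cube_def dist_real_def by auto
  qed
  then show "\<forall>\<^sub>F p in nhds (0, 0, 0). P p"
    unfolding eventually_nhds_metric using r(1) by blast
qed

lemma germ_eq_iff_cube: "germ_eq f g \<longleftrightarrow> (\<exists>r>0. \<forall>p\<in>cube r. f p = g p)"
  unfolding germ_eq_def eventually_nhds0_iff_cube ..

lemma germ_eqI: "r > 0 \<Longrightarrow> (\<And>p. p \<in> cube r \<Longrightarrow> f p = g p) \<Longrightarrow> germ_eq f g"
  unfolding germ_eq_iff_cube by blast

lemma analytic_at0_iff_powser:
  "analytic_at0 f \<longleftrightarrow> (\<exists>c r. r > 0 \<and> powser_conv c r \<and> (\<forall>p\<in>cube r. f p = powser c p))"
proof -
  have monom3_term:
    "(\<lambda>(i, j, k). c (i, j, k) * t ^ i * x ^ j * y ^ k) = (\<lambda>n. c n * monom3 n (t, x, y))"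
    for c :: "nat \<times> nat \<times> nat \<Rightarrow> real" and t x y
    by (simp add: fun_eq_iff split_def monom3_def mult.assoc)
  have "analytic_at0 f \<longleftrightarrow>
      (\<exists>r>0. \<exists>c. \<forall>p\<in>cube r. ((\<lambda>n. c n * monom3 n p) has_sum f p) UNIV)"
    unfolding analytic_at0_def monom3_term by (auto simp: cube_def)
  also have "\<dots> \<longleftrightarrow> (\<exists>c r. r > 0 \<and> powser_conv c r \<and> (\<forall>p\<in>cube r. f p = powser c p))"
  proof
    assume "\<exists>r>0. \<exists>c. \<forall>p\<in>cube r. ((\<lambda>n. c n * monom3 n p) has_sum f p) UNIV"
    then obtain r c where "r > 0" "\<And>p. p \<in> cube r \<Longrightarrow> ((\<lambda>n. c n * monom3 n p) has_sum f p) UNIV"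
      by blast
    then show "\<exists>c r. r > 0 \<and> powser_conv c r \<and> (\<forall>p\<in>cube r. f p = powser c p)"
      using powser_convI powser_eqI by metis
  qed (use powser_has_sum in fastforce)
  finally show ?thesis .
qed

lemma analytic_at0I:
  "r > 0 \<Longrightarrow> powser_conv c r \<Longrightarrow> (\<And>p. p \<in> cube r \<Longrightarrow> f p = powser c p) \<Longrightarrow> analytic_at0 f"
  unfolding analytic_at0_iff_powser by blast

lemma analytic_at0E:
  assumes "analytic_at0 f"
  obtains c r where "r > 0" "powser_conv c r" "\<And>p. p \<in> cube r \<Longrightarrow> f p = powser c p"
  using assms unfolding analytic_at0_iff_powser by blast

lemma powser_conv_add: "powser_conv c r \<Longrightarrow> powser_conv d r \<Longrightarrow> powser_conv (\<lambda>n. c n + d n) r"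
  unfolding powser_conv_def by (auto simp: distrib_right intro: summable_on_add)

lemma powser_add:
  "powser_conv c r \<Longrightarrow> powser_conv d r \<Longrightarrow> p \<in> cube r \<Longrightarrow>
    powser (\<lambda>n. c n + d n) p = powser c p + powser d p"
  using has_sum_add[OF powser_has_sum[of c r p] powser_has_sum[of d r p]]
  by (intro powser_eqI) (simp add: distrib_right)

lemma powser_conv_cmult: "powser_conv c r \<Longrightarrow> powser_conv (\<lambda>n. a * c n) r"
  unfolding powser_conv_def by (auto simp: mult.assoc intro: summable_on_cmult_right)

lemma powser_cmult: "powser (\<lambda>n. a * c n) p = a * powser c p"
  unfolding powser_def by (simp add: mult.assoc infsum_cmult_right')

lemma has_sum_single_monom3:
  "((\<lambda>n. (if n = m then a else 0) * monom3 n p) has_sum a * monom3 m p) UNIV"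
  by (rule has_sum_finite_neutralI[of "{m}"]) auto

lemma powser_conv_single: "powser_conv (\<lambda>n. if n = m then a else 0) r"
  using has_sum_single_monom3 by (rule powser_convI)

lemma powser_single: "powser (\<lambda>n. if n = m then a else 0) p = a * monom3 m p"
  using has_sum_single_monom3 by (rule powser_eqI)

lemma analytic_at0_const: "analytic_at0 (\<lambda>p. a)"
  by (rule analytic_at0I[of 1 "\<lambda>n. if n = (0, 0, 0) then a else 0"])
    (auto simp: powser_conv_single powser_single monom3_def)

lemma analytic_at0_fst: "analytic_at0 fst"
  by (rule analytic_at0I[of 1 "\<lambda>n. if n = (1, 0, 0) then 1 else 0"])
    (auto simp: powser_conv_single powser_single monom3_def)

lemma analytic_at0_binop:
  assumes "analytic_at0 f" "analytic_at0 g"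
    and "\<And>c d r. powser_conv c r \<Longrightarrow> powser_conv d r \<Longrightarrow>
           powser_conv (op c d) r \<and> (\<forall>p\<in>cube r. powser (op c d) p = F (powser c p) (powser d p))"
  shows "analytic_at0 (\<lambda>p. F (f p) (g p))"
proof -
  obtain c r where r: "r > 0" "powser_conv c r" "\<And>p. p \<in> cube r \<Longrightarrow> f p = powser c p"
    using assms(1) analytic_at0E by blast
  obtain d s where s: "s > 0" "powser_conv d s" "\<And>p. p \<in> cube s \<Longrightarrow> g p = powser d p"
    using assms(2) analytic_at0E by blast
  have "powser_conv c (min r s)" "powser_conv d (min r s)"
    using powser_conv_mono r s by auto
  then have conv: "powser_conv (op c d) (min r s)"
    and eq: "\<And>p. p \<in> cube (min r s) \<Longrightarrow> powser (op c d) p = F (powser c p) (powser d p)"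
    using assms(3) by blast+
  show ?thesis
  proof (rule analytic_at0I[OF _ conv])
    fix p assume p: "p \<in> cube (min r s)"
    have "p \<in> cube r" "p \<in> cube s" using cube_mono[OF _ p] by auto
    then show "F (f p) (g p) = powser (op c d) p" using r(3) s(3) eq[OF p] by simp
  qed (use r s in simp)
qed

lemma analytic_at0_add: "analytic_at0 f \<Longrightarrow> analytic_at0 g \<Longrightarrow> analytic_at0 (\<lambda>p. f p + g p)"
  by (rule analytic_at0_binop[where op = "\<lambda>c d n. c n + d n" and F = "(+)"])
    (auto simp: powser_conv_add powser_add)

lemma analytic_at0_cmult: "analytic_at0 f \<Longrightarrow> analytic_at0 (\<lambda>p. a * f p)"
  by (rule analytic_at0_binop[OF analytic_at0_const, where op = "\<lambda>c d n. a * d n" and F = "\<lambda>_ y. a * y"])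
    (auto simp: powser_conv_cmult powser_cmult)

lemma analytic_at0_diff: "analytic_at0 f \<Longrightarrow> analytic_at0 g \<Longrightarrow> analytic_at0 (\<lambda>p. f p - g p)"
  using analytic_at0_add[of f "\<lambda>p. (-1) * g p"] analytic_at0_cmult[of g "-1"] by simp

definition cauchy_prod ::
    "(nat \<times> nat \<times> nat \<Rightarrow> real) \<Rightarrow> (nat \<times> nat \<times> nat \<Rightarrow> real) \<Rightarrow> nat \<times> nat \<times> nat \<Rightarrow> real" where
  "cauchy_prod c d n = (\<Sum>a\<in>{a. a \<le> n}. c a * d (n - a))"

lemma finite_le_nat3: "finite {a :: nat \<times> nat \<times> nat. a \<le> n}"
  by (rule finite_subset[of _ "{..fst n} \<times> {..fst (snd n)} \<times> {..snd (snd n)}"])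
    (auto simp: less_eq_prod_def)

lemma monom3_add: "monom3 (a + b) p = monom3 a p * monom3 b p"
  by (simp add: monom3_def power_add mult_ac)

lemma nat3_add_diff: "(a :: nat \<times> nat \<times> nat) \<le> n \<Longrightarrow> a + (n - a) = n"
  by (cases a; cases n) auto

lemma has_sum_antidiagonals:
  fixes H :: "(nat \<times> nat \<times> nat) \<times> (nat \<times> nat \<times> nat) \<Rightarrow> real"
  assumes "(H has_sum S) UNIV"
  shows "((\<lambda>n. \<Sum>a\<in>{a. a \<le> n}. H (a, n - a)) has_sum S) UNIV"
proof -
  have add_diff: "(a :: nat \<times> nat \<times> nat) + b - a = b" "a \<le> a + b" for a b
    by (cases a; cases b; simp)+
  have "(H has_sum S) UNIV \<longleftrightarrow> ((\<lambda>(n, a). H (a, n - a)) has_sum S) (SIGMA n:UNIV. {a. a \<le> n})"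
    by (rule has_sum_reindex_bij_witness[where i = "\<lambda>(n, a). (a, n - a)" and j = "\<lambda>(a, b). (a + b, a)"])
      (auto simp: nat3_add_diff add_diff)
  with assms show ?thesis
    by (auto elim!: has_sum_Sigma' simp: finite_le_nat3)
qed

lemma powser_cauchy_prod_has_sum:
  assumes "powser_conv c r" "powser_conv d r" "p \<in> cube r"
  shows "((\<lambda>n. cauchy_prod c d n * monom3 n p) has_sum (powser c p * powser d p)) UNIV"
proof -
  have "((\<lambda>(a, b). (c a * monom3 a p) * (d b * monom3 b p)) has_sum (powser c p * powser d p)) UNIV"
    using assms by (intro has_sum_mult_family powser_has_sum powser_conv_abs_summable)
  then have "((\<lambda>n. \<Sum>a\<in>{a. a \<le> n}. (c a * monom3 a p) * (d (n - a) * monom3 (n - a) p))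
      has_sum (powser c p * powser d p)) UNIV"
    using has_sum_antidiagonals by fastforce
  moreover have "(\<Sum>a\<in>{a. a \<le> n}. (c a * monom3 a p) * (d (n - a) * monom3 (n - a) p))
      = cauchy_prod c d n * monom3 n p" for n
    unfolding cauchy_prod_def sum_distrib_right
    by (intro sum.cong) (auto simp: monom3_add[symmetric] nat3_add_diff mult_ac)
  ultimately show ?thesis by simp
qed

lemma powser_conv_cauchy_prod:
  "powser_conv c r \<Longrightarrow> powser_conv d r \<Longrightarrow> powser_conv (cauchy_prod c d) r"
  by (rule powser_convI) (rule powser_cauchy_prod_has_sum)

lemma powser_cauchy_prod:
  "powser_conv c r \<Longrightarrow> powser_conv d r \<Longrightarrow> p \<in> cube r \<Longrightarrow>
    powser (cauchy_prod c d) p = powser c p * powser d p"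
  by (rule powser_eqI) (rule powser_cauchy_prod_has_sum)

lemma analytic_at0_mult: "analytic_at0 f \<Longrightarrow> analytic_at0 g \<Longrightarrow> analytic_at0 (\<lambda>p. f p * g p)"
  by (rule analytic_at0_binop[where op = cauchy_prod and F = "\<lambda>x y. x * y"])
    (auto simp: powser_conv_cauchy_prod powser_cauchy_prod)

definition coeff_dt :: "(nat \<times> nat \<times> nat \<Rightarrow> real) \<Rightarrow> nat \<times> nat \<times> nat \<Rightarrow> real" where
  "coeff_dt c n = real (Suc (fst n)) * c (Suc (fst n), snd n)"

lemma powser_conv_coeff_dt: assumes "powser_conv c r" shows "powser_conv (coeff_dt c) r"
proof (rule powser_conv_dominated[OF assms, of "\<lambda>n. (Suc (fst n), snd n)"])
  show "inj (\<lambda>n::nat\<times>nat\<times>nat. (Suc (fst n), snd n))" by (auto simp: inj_def prod_eq_iff)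
  fix p assume p: "p \<in> cube r"
  obtain t x y where pe: "p = (t,x,y)" by (cases p) auto
  define \<rho> where "\<rho> = (\<bar>t\<bar> + r) / 2"
  have r\<rho>: "\<bar>t\<bar> < \<rho>" "\<rho> < r" "\<rho> > 0" using p pe by (auto simp: \<rho>_def)
  obtain B where B: "B > 0" "\<And>i. real (Suc i) * (\<bar>t\<bar>/\<rho>) ^ i \<le> B"
    using Suc_mult_power_bounded[of "\<bar>t\<bar>/\<rho>"] r\<rho> by auto
  have "(\<rho>,x,y) \<in> cube r" using p pe r\<rho> by auto
  moreover have "\<forall>n. \<bar>coeff_dt c n * monom3 n p\<bar> \<le> (B/\<rho>) * \<bar>c (Suc (fst n), snd n) * monom3 (Suc (fst n), snd n) (\<rho>,x,y)\<bar>"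
  proof
    fix n :: "nat \<times> nat \<times> nat"
    obtain i j k where ne: "n = (i,j,k)" by (cases n) auto
    have "real (Suc i) * \<bar>t\<bar> ^ i = (real (Suc i) * (\<bar>t\<bar>/\<rho>) ^ i) * \<rho> ^ i"
      using r\<rho> by (simp add: power_divide)
    also have "\<dots> \<le> B * \<rho> ^ i" by (rule mult_right_mono[OF B(2)]) (use r\<rho> in simp)
    finally have a: "real (Suc i) * \<bar>t\<bar> ^ i \<le> B * \<rho> ^ i" .
    have "\<bar>c (Suc i, j, k)\<bar> * (real (Suc i) * \<bar>t\<bar> ^ i) * \<bar>x\<bar> ^ j * \<bar>y\<bar> ^ k \<le> \<bar>c (Suc i, j, k)\<bar> * (B * \<rho> ^ i) * \<bar>x\<bar> ^ j * \<bar>y\<bar> ^ k"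
      by (intro mult_right_mono mult_left_mono a) auto
    also have "\<dots> = (B/\<rho>) * (\<bar>c (Suc i, j, k)\<bar> * (\<rho> * \<rho> ^ i) * \<bar>x\<bar> ^ j * \<bar>y\<bar> ^ k)"
      using r\<rho> by (simp add: field_simps)
    finally show "\<bar>coeff_dt c n * monom3 n p\<bar> \<le> (B/\<rho>) * \<bar>c (Suc (fst n), snd n) * monom3 (Suc (fst n), snd n) (\<rho>,x,y)\<bar>"
      using r\<rho> by (simp add: ne pe coeff_dt_def abs_mult power_abs mult_ac)
  qed
  ultimately show "\<exists>q\<in>cube r. \<exists>K. \<forall>n. \<bar>coeff_dt c n * monom3 n p\<bar> \<le> K * \<bar>c (Suc (fst n), snd n) * monom3 (Suc (fst n), snd n) q\<bar>"
    by blast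
qed

definition coeff_tshift :: "(nat \<times> nat \<times> nat \<Rightarrow> real) \<Rightarrow> nat \<times> nat \<times> nat \<Rightarrow> real" where
  "coeff_tshift c n = c (Suc (fst n), snd n)"

lemma powser_conv_coeff_tshift:
  assumes "powser_conv c r" shows "powser_conv (coeff_tshift c) r"
proof (rule powser_conv_dominated[OF powser_conv_coeff_dt[OF assms] inj_on_id])
  fix p assume "p \<in> cube r"
  moreover have "\<bar>coeff_tshift c n * monom3 n p\<bar> \<le> 1 * \<bar>coeff_dt c (id n) * monom3 (id n) p\<bar>" for n
    using mult_right_mono[of 1 "real (Suc (fst n))" "\<bar>c (Suc (fst n), snd n) * monom3 n p\<bar>"]
    by (simp add: coeff_tshift_def coeff_dt_def abs_mult mult.assoc)
  ultimately show "\<exists>q\<in>cube r. \<exists>K. \<forall>n. \<bar>coeff_tshift c n * monom3 n p\<bar> \<le> K * \<bar>coeff_dt c (id n) * monom3 (id n) q\<bar>"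
    by blast
qed

definition coeff_t0 :: "(nat \<times> nat \<times> nat \<Rightarrow> real) \<Rightarrow> nat \<times> nat \<times> nat \<Rightarrow> real" where
  "coeff_t0 c n = (if fst n = 0 then c n else 0)"

lemma powser_conv_coeff_t0: assumes "powser_conv c r" shows "powser_conv (coeff_t0 c) r"
proof (rule powser_conv_dominated[OF assms, of id])
  fix p assume "p \<in> cube r"
  moreover have "\<forall>n. \<bar>coeff_t0 c n * monom3 n p\<bar> \<le> 1 * \<bar>c (id n) * monom3 (id n) p\<bar>"
    by (auto simp: coeff_t0_def)
  ultimately show "\<exists>q\<in>cube r. \<exists>K. \<forall>n. \<bar>coeff_t0 c n * monom3 n p\<bar> \<le> K * \<bar>c (id n) * monom3 (id n) q\<bar>"
    by blast
qed simp

lemma powser_split_t0: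
  assumes "powser_conv c r" "(t,x,y) \<in> cube r"
  shows "powser c (t,x,y) = powser (coeff_t0 c) (t,x,y) + t * powser (coeff_tshift c) (t,x,y)"
proof -
  let ?p = "(t,x,y)"
  let ?h = "\<lambda>n::nat\<times>nat\<times>nat. (Suc (fst n), snd n)"
  have inj: "inj ?h" by (auto simp: inj_def prod_eq_iff)
  have rng: "n \<in> range ?h \<longleftrightarrow> fst n \<noteq> 0" for n
  proof
    assume "fst n \<noteq> 0" then show "n \<in> range ?h"
      by (intro image_eqI[of _ _ "(fst n - 1, snd n)"]) auto
  qed auto
  have h1: "((\<lambda>n. t * (coeff_tshift c n * monom3 n ?p)) has_sum t * powser (coeff_tshift c) ?p) UNIV"
    by (rule has_sum_cmult_right[OF powser_has_sum[OF powser_conv_coeff_tshift[OF assms(1)] assms(2)]])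
  have h1': "((\<lambda>n. c (?h n) * monom3 (?h n) ?p) has_sum t * powser (coeff_tshift c) ?p) UNIV"
    using h1 by (simp add: coeff_tshift_def monom3_def mult_ac)
  have h2: "((\<lambda>n. if n \<in> range ?h then c n * monom3 n ?p else 0) has_sum t * powser (coeff_tshift c) ?p) UNIV"
    by (rule has_sum_restrict_range[OF inj h1'])
  have h3: "((\<lambda>n. coeff_t0 c n * monom3 n ?p) has_sum powser (coeff_t0 c) ?p) UNIV"
    by (rule powser_has_sum[OF powser_conv_coeff_t0[OF assms(1)] assms(2)])
  have "((\<lambda>n. coeff_t0 c n * monom3 n ?p + (if n \<in> range ?h then c n * monom3 n ?p else 0)) has_sum
     (powser (coeff_t0 c) ?p + t * powser (coeff_tshift c) ?p)) UNIV"
    by (rule has_sum_add[OF h3 h2])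
  moreover have "(\<lambda>n. coeff_t0 c n * monom3 n ?p + (if n \<in> range ?h then c n * monom3 n ?p else 0)) = (\<lambda>n. c n * monom3 n ?p)"
    by (auto simp: rng coeff_t0_def fun_eq_iff)
  ultimately have "((\<lambda>n. c n * monom3 n ?p) has_sum (powser (coeff_t0 c) ?p + t * powser (coeff_tshift c) ?p)) UNIV" by simp
  then show ?thesis by (rule powser_eqI)
qed

lemma powser_coeff_t0_indep: "powser (coeff_t0 c) (t,x,y) = powser (coeff_t0 c) (0,x,y)"
proof -
  have "(\<lambda>n. coeff_t0 c n * monom3 n (t,x,y)) = (\<lambda>n. coeff_t0 c n * monom3 n (0,x,y))"
    by (auto simp: coeff_t0_def monom3_def fun_eq_iff)
  then show ?thesis by (simp add: powser_def)
qed

lemma analytic_at0_split_t0: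
  assumes "analytic_at0 f"
  obtains h where "analytic_at0 h" "germ_eq f (\<lambda>(t, x, y). f (0, x, y) + t * h (t, x, y))"
proof -
  obtain c r where r: "r > 0" "powser_conv c r" "\<And>p. p \<in> cube r \<Longrightarrow> f p = powser c p"
    using assms analytic_at0E by blast
  have "f (0, x, y) = powser (coeff_t0 c) (t, x, y)" if "(t, x, y) \<in> cube r" for t x y
    using that r powser_split_t0[OF r(2), of 0 x y] powser_coeff_t0_indep[of c t x y] by simp
  then have "germ_eq f (\<lambda>(t, x, y). f (0, x, y) + t * powser (coeff_tshift c) (t, x, y))"
    using r powser_split_t0[OF r(2)] by (intro germ_eqI[OF r(1)]) auto
  moreover have "analytic_at0 (powser (coeff_tshift c))"
    by (rule analytic_at0I[OF r(1) powser_conv_coeff_tshift[OF r(2)]]) simp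
  ultimately show ?thesis by (rule that[rotated])
qed

subsection \<open>Substituting t^2 for t\<close>

definition tsq :: "real \<times> real \<times> real \<Rightarrow> real \<times> real \<times> real" where
  "tsq p = ((fst p)\<^sup>2, fst (snd p), snd (snd p))"

lemma tsq_Pair [simp]: "tsq (t, x, y) = (t\<^sup>2, x, y)"
  by (simp add: tsq_def)

lemma tsq_in_cube: "p \<in> cube (min r 1) \<Longrightarrow> tsq p \<in> cube r"
proof (cases p)
  case (fields t x y)
  assume p: "p \<in> cube (min r 1)"
  have "t\<^sup>2 \<le> \<bar>t\<bar> * 1"
    unfolding power2_eq_square using p fields by (metis abs_ge_zero abs_mult_self_eq
      in_cube min_less_iff_conj mult_left_mono order_less_imp_le)
  then show ?thesis using p fields by auto
qed

definition coeff_even :: "(nat \<times> nat \<times> nat \<Rightarrow> real) \<Rightarrow> nat \<times> nat \<times> nat \<Rightarrow> real" where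
  "coeff_even c n = c (2 * fst n, snd n)"

lemma powser_conv_coeff_even:
  assumes "powser_conv c r" "r > 0"
  shows "powser_conv (coeff_even c) (min r (r\<^sup>2))"
proof (rule powser_conv_dominated[OF assms(1), of "\<lambda>n. (2 * fst n, snd n)"])
  show "inj (\<lambda>n::nat \<times> nat \<times> nat. (2 * fst n, snd n))" by (auto simp: inj_def prod_eq_iff)
  fix p assume p: "p \<in> cube (min r (r\<^sup>2))"
  obtain s x y where pe: "p = (s, x, y)" by (cases p) auto
  define \<rho> where "\<rho> = max (sqrt \<bar>s\<bar>) (r / 2)"
  have "sqrt \<bar>s\<bar> < sqrt (r\<^sup>2)" using p pe by (intro real_sqrt_less_mono) simp
  then have r\<rho>: "\<rho> < r" "\<bar>s\<bar> \<le> \<rho>\<^sup>2"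
    using assms(2) real_sqrt_le_iff[of "\<bar>s\<bar>" "\<rho>\<^sup>2"] by (auto simp: \<rho>_def)
  have "(\<rho>, x, y) \<in> cube r" using p pe r\<rho> assms(2) by (auto simp: \<rho>_def)
  moreover have "\<bar>coeff_even c n * monom3 n p\<bar> \<le>
      1 * \<bar>c (2 * fst n, snd n) * monom3 (2 * fst n, snd n) (\<rho>, x, y)\<bar>" for n
  proof (cases n)
    case (fields i j k)
    have "\<bar>s\<bar> ^ i \<le> (\<rho>\<^sup>2) ^ i" by (rule power_mono) (use r\<rho> in auto)
    then have "\<bar>c (2 * i, j, k)\<bar> * \<bar>s\<bar> ^ i * \<bar>x\<bar> ^ j * \<bar>y\<bar> ^ k \<le>
        \<bar>c (2 * i, j, k)\<bar> * (\<rho>\<^sup>2) ^ i * \<bar>x\<bar> ^ j * \<bar>y\<bar> ^ k"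
      by (intro mult_right_mono mult_left_mono) auto
    then show ?thesis
      by (simp add: fields pe coeff_even_def abs_mult power_abs power_mult)
  qed
  ultimately show "\<exists>q\<in>cube r. \<exists>K. \<forall>n. \<bar>coeff_even c n * monom3 n p\<bar> \<le>
      K * \<bar>c (2 * fst n, snd n) * monom3 (2 * fst n, snd n) q\<bar>"
    by blast
qed

lemma range_double_fst: "n \<in> range (\<lambda>n::nat \<times> nat \<times> nat. (2 * fst n, snd n)) \<longleftrightarrow> even (fst n)"
  by (auto intro: image_eqI[of _ _ "(fst n div 2, snd n)"])

lemma range_Suc_double_fst:
  "n \<in> range (\<lambda>n::nat \<times> nat \<times> nat. (Suc (2 * fst n), snd n)) \<longleftrightarrow> odd (fst n)"
proof
  assume "odd (fst n)"
  then show "n \<in> range (\<lambda>n::nat \<times> nat \<times> nat. (Suc (2 * fst n), snd n))"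
    by (intro image_eqI[of _ _ "(fst n div 2, snd n)"]) (auto elim!: oddE)
qed auto

lemma powser_split_even_odd:
  assumes "powser_conv c r" "r > 0" "(t\<^sup>2, x, y) \<in> cube (min r (r\<^sup>2))"
  shows "powser c (t, x, y) =
    powser (coeff_even c) (t\<^sup>2, x, y) + t * powser (coeff_even (coeff_tshift c)) (t\<^sup>2, x, y)"
proof -
  let ?p = "(t, x, y)" and ?q = "(t\<^sup>2, x, y)"
  let ?he = "\<lambda>n::nat \<times> nat \<times> nat. (2 * fst n, snd n)"
    and ?ho = "\<lambda>n::nat \<times> nat \<times> nat. (Suc (2 * fst n), snd n)"
  have inj: "inj ?he" "inj ?ho" by (auto simp: inj_def prod_eq_iff)
  have "((\<lambda>n. coeff_even c n * monom3 n ?q) has_sum powser (coeff_even c) ?q) UNIV"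
    by (rule powser_has_sum[OF powser_conv_coeff_even[OF assms(1,2)] assms(3)])
  then have even: "((\<lambda>n. c (?he n) * monom3 (?he n) ?p) has_sum powser (coeff_even c) ?q) UNIV"
    by (simp add: coeff_even_def monom3_def power_mult)
  have "((\<lambda>n. t * (coeff_even (coeff_tshift c) n * monom3 n ?q))
      has_sum t * powser (coeff_even (coeff_tshift c)) ?q) UNIV"
    by (intro has_sum_cmult_right powser_has_sum[OF _ assms(3)] powser_conv_coeff_even
        powser_conv_coeff_tshift assms(1,2))
  moreover have "c (?ho n) * monom3 (?ho n) ?p = t * (coeff_even (coeff_tshift c) n * monom3 n ?q)" for n
    by (cases n) (simp add: coeff_even_def coeff_tshift_def power_mult)
  ultimately have odd: "((\<lambda>n. c (?ho n) * monom3 (?ho n) ?p)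
      has_sum t * powser (coeff_even (coeff_tshift c)) ?q) UNIV"
    by simp
  have "(\<lambda>n. c n * monom3 n ?p) = (\<lambda>n. (if n \<in> range ?he then c n * monom3 n ?p else 0) +
      (if n \<in> range ?ho then c n * monom3 n ?p else 0))"
    unfolding range_double_fst range_Suc_double_fst by (auto simp: fun_eq_iff)
  then show ?thesis
    using has_sum_add[OF has_sum_restrict_range[OF inj(1) even] has_sum_restrict_range[OF inj(2) odd]]
    by (intro powser_eqI) simp
qed

lemma analytic_at0_even_odd:
  assumes "analytic_at0 f"
  obtains fe fo where "analytic_at0 fe" "analytic_at0 fo"
    "germ_eq f (\<lambda>p. fe (tsq p) + fst p * fo (tsq p))"
proof -
  obtain c r where r: "r > 0" "powser_conv c r" "\<And>p. p \<in> cube r \<Longrightarrow> f p = powser c p"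
    using assms analytic_at0E by blast
  define r' where "r' = min r (r\<^sup>2)"
  have "r' > 0" using r by (simp add: r'_def)
  have "analytic_at0 (powser (coeff_even c))"
    using powser_conv_coeff_even[OF r(2,1)] \<open>r' > 0\<close> by (intro analytic_at0I) (auto simp: r'_def)
  moreover have "analytic_at0 (powser (coeff_even (coeff_tshift c)))"
    using powser_conv_coeff_even[OF powser_conv_coeff_tshift[OF r(2)] r(1)] \<open>r' > 0\<close>
    by (intro analytic_at0I) (auto simp: r'_def)
  moreover have "germ_eq f (\<lambda>p. powser (coeff_even c) (tsq p) +
      fst p * powser (coeff_even (coeff_tshift c)) (tsq p))"
  proof (rule germ_eqI[of "min r' 1"])
    fix p assume p: "p \<in> cube (min r' 1)"
    then have "p \<in> cube r" "tsq p \<in> cube r'"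
      using cube_mono[of "min r' 1" r p] tsq_in_cube[of p r'] by (auto simp: r'_def)
    then show "f p = powser (coeff_even c) (tsq p) + fst p * powser (coeff_even (coeff_tshift c)) (tsq p)"
      using powser_split_even_odd[OF r(2,1)] r(3) by (cases p) (simp add: r'_def)
  qed (use \<open>r' > 0\<close> in simp)
  ultimately show ?thesis by (rule that)
qed

definition coeff_tsq :: "(nat \<times> nat \<times> nat \<Rightarrow> real) \<Rightarrow> nat \<times> nat \<times> nat \<Rightarrow> real" where
  "coeff_tsq c n = (if even (fst n) then c (fst n div 2, snd n) else 0)"

lemma has_sum_coeff_tsq:
  assumes "powser_conv c r" "tsq p \<in> cube r"
  shows "((\<lambda>n. coeff_tsq c n * monom3 n p) has_sum powser c (tsq p)) UNIV"
proof (rule has_sum_reindex_inj[of "\<lambda>n::nat \<times> nat \<times> nat. (2 * fst n, snd n)"])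
  show "inj (\<lambda>n::nat \<times> nat \<times> nat. (2 * fst n, snd n))" by (auto simp: inj_def prod_eq_iff)
  show "coeff_tsq c n * monom3 n p = 0" if "n \<notin> range (\<lambda>n::nat \<times> nat \<times> nat. (2 * fst n, snd n))" for n
    using that unfolding range_double_fst by (simp add: coeff_tsq_def)
  show "((\<lambda>n. coeff_tsq c (2 * fst n, snd n) * monom3 (2 * fst n, snd n) p) has_sum powser c (tsq p)) UNIV"
    using powser_has_sum[OF assms] by (cases p) (simp add: coeff_tsq_def monom3_def power_mult)
qed

lemma analytic_at0_comp_tsq: "analytic_at0 f \<Longrightarrow> analytic_at0 (\<lambda>p. f (tsq p))"
proof -
  assume "analytic_at0 f"
  then obtain c r where r: "r > 0" "powser_conv c r" "\<And>p. p \<in> cube r \<Longrightarrow> f p = powser c p"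
    using analytic_at0E by blast
  have "powser_conv (coeff_tsq c) (min r 1)"
    using has_sum_coeff_tsq[OF r(2) tsq_in_cube] by (rule powser_convI)
  moreover have "f (tsq p) = powser (coeff_tsq c) p" if "p \<in> cube (min r 1)" for p
    using r(3) tsq_in_cube[OF that] powser_eqI[OF has_sum_coeff_tsq[OF r(2) tsq_in_cube[OF that]]]
    by simp
  ultimately show ?thesis using r(1) by (intro analytic_at0I[of "min r 1"]) auto
qed

lemma germ_eq_comp_tsq: "germ_eq f g \<Longrightarrow> germ_eq (\<lambda>p. f (tsq p)) (\<lambda>p. g (tsq p))"
  unfolding germ_eq_iff_cube by (metis min_less_iff_conj tsq_in_cube zero_less_one)

definition tcoeff :: "(nat \<times> nat \<times> nat \<Rightarrow> real) \<Rightarrow> real \<Rightarrow> real \<Rightarrow> nat \<Rightarrow> real" where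
  "tcoeff c x y i = (\<Sum>\<^sub>\<infinity>jk. c (i, jk) * (x ^ fst jk * y ^ snd jk))"

lemma monom3_split: "monom3 (i, jk) (s, x, y) = s ^ i * (x ^ fst jk * y ^ snd jk)"
  by (simp add: monom3_def mult_ac)

lemma has_sum_tcoeff:
  assumes "powser_conv c r" "(s, x, y) \<in> cube r"
  shows "((\<lambda>jk. c (i, jk) * (x ^ fst jk * y ^ snd jk)) has_sum tcoeff c x y i) UNIV"
proof -
  have "r > 0" using assms(2) by (auto intro: le_less_trans[OF abs_ge_zero])
  then have "(r / 2, x, y) \<in> cube r" using assms(2) by simp
  then have "(\<lambda>n. c n * monom3 n (r / 2, x, y)) summable_on range (\<lambda>jk. (i, jk))"
    using powser_has_sum[OF assms(1)] has_sum_imp_summable summable_on_subset by blast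
  then have "(\<lambda>jk. (c (i, jk) * (x ^ fst jk * y ^ snd jk)) * (r / 2) ^ i) summable_on UNIV"
    using summable_on_reindex[of "\<lambda>jk. (i, jk)" UNIV "\<lambda>n. c n * monom3 n (r / 2, x, y)"]
    by (simp add: inj_def o_def monom3_split mult_ac)
  then have "(\<lambda>jk. c (i, jk) * (x ^ fst jk * y ^ snd jk)) summable_on UNIV"
    using summable_on_cmult_left'[of "(r / 2) ^ i" "\<lambda>jk. c (i, jk) * (x ^ fst jk * y ^ snd jk)" UNIV]
      \<open>r > 0\<close> by simp
  then show ?thesis unfolding tcoeff_def by (rule has_sum_infsum)
qed

lemma powser_has_sum_tseries:
  assumes "powser_conv c r" "(s, x, y) \<in> cube r"
  shows "((\<lambda>i. tcoeff c x y i * s ^ i) has_sum powser c (s, x, y)) UNIV"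
proof -
  have "((\<lambda>n. c n * monom3 n (s, x, y)) has_sum powser c (s, x, y)) (SIGMA i:UNIV. UNIV)"
    using powser_has_sum[OF assms] by simp
  then show ?thesis
  proof (rule has_sum_Sigma')
    show "((\<lambda>jk. c (i, jk) * monom3 (i, jk) (s, x, y)) has_sum tcoeff c x y i * s ^ i) UNIV" for i
      using has_sum_cmult_right[OF has_sum_tcoeff[OF assms, of i], of "s ^ i"]
      by (simp add: monom3_split mult_ac)
  qed
qed

lemma powser_tseries:
  "powser_conv c r \<Longrightarrow> (s, x, y) \<in> cube r \<Longrightarrow> (\<lambda>i. tcoeff c x y i * s ^ i) sums powser c (s, x, y)"
  by (rule has_sum_imp_sums[OF powser_has_sum_tseries])

lemma tcoeff_coeff_dt: "tcoeff (coeff_dt c) x y i = diffs (tcoeff c x y) i"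
proof -
  have "tcoeff (coeff_dt c) x y i =
      (\<Sum>\<^sub>\<infinity>jk. real (Suc i) * (c (Suc i, jk) * (x ^ fst jk * y ^ snd jk)))"
    unfolding tcoeff_def coeff_dt_def by (simp add: mult_ac)
  also have "\<dots> = real (Suc i) * tcoeff c x y (Suc i)"
    unfolding tcoeff_def by (rule infsum_cmult_right')
  finally show ?thesis by (simp add: diffs_def)
qed

lemma powser_has_deriv_t:
  assumes "powser_conv c r" "(t, x, y) \<in> cube r"
  shows "((\<lambda>s. powser c (s, x, y)) has_real_derivative powser (coeff_dt c) (t, x, y)) (at t)"
proof -
  have "summable (\<lambda>i. tcoeff c x y i * z ^ i)" if "norm z < r" for z
    using that assms powser_tseries[OF assms(1), of z x y] by (auto intro: sums_summable)
  then have "((\<lambda>z. \<Sum>i. tcoeff c x y i * z ^ i)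
      has_field_derivative (\<Sum>i. diffs (tcoeff c x y) i * t ^ i)) (at t)"
    by (rule termdiffs_strong') (use assms(2) in auto)
  moreover have "(\<Sum>i. diffs (tcoeff c x y) i * t ^ i) = powser (coeff_dt c) (t, x, y)"
    using powser_tseries[OF powser_conv_coeff_dt[OF assms(1)] assms(2)]
    by (simp add: tcoeff_coeff_dt sums_iff)
  ultimately have "((\<lambda>z. \<Sum>i. tcoeff c x y i * z ^ i)
      has_field_derivative powser (coeff_dt c) (t, x, y)) (at t)"
    by simp
  then show ?thesis
  proof (rule has_field_derivative_transform_within_open[of _ _ _ "ball 0 r"])
    show "(\<Sum>i. tcoeff c x y i * s ^ i) = powser c (s, x, y)" if "s \<in> ball 0 r" for s
      using that powser_tseries[OF assms(1), of s x y] assms(2) by (simp add: sums_iff)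
  qed (use assms(2) in auto)
qed

lemma has_deriv_pdiff0_powser:
  assumes "powser_conv c r" "\<And>p. p \<in> cube r \<Longrightarrow> f p = powser c p" "(t, x, y) \<in> cube r"
  shows "((\<lambda>s. f (s, x, y)) has_real_derivative powser (coeff_dt c) (t, x, y)) (at t)"
    and "pdiff 0 f (t, x, y) = powser (coeff_dt c) (t, x, y)"
proof -
  show d: "((\<lambda>s. f (s, x, y)) has_real_derivative powser (coeff_dt c) (t, x, y)) (at t)"
  proof (rule has_field_derivative_transform_within_open[OF powser_has_deriv_t[OF assms(1,3)]])
    show "powser c (s, x, y) = f (s, x, y)" if "s \<in> ball 0 r" for s
      using that assms(2,3) by simp
  qed (use assms(3) in auto)
  from DERIV_imp_deriv[OF d] show "pdiff 0 f (t, x, y) = powser (coeff_dt c) (t, x, y)"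
    by (simp add: pdiff_def)
qed

lemma analytic_at0_has_pdiff0:
  assumes "analytic_at0 f"
  obtains r where "r > 0"
    "\<And>t x y. (t, x, y) \<in> cube r \<Longrightarrow> ((\<lambda>s. f (s, x, y)) has_real_derivative pdiff 0 f (t, x, y)) (at t)"
proof -
  obtain c r where "r > 0" "powser_conv c r" "\<And>p. p \<in> cube r \<Longrightarrow> f p = powser c p"
    using assms analytic_at0E by blast
  with has_deriv_pdiff0_powser[of c r f] show ?thesis
    using that by auto
qed

lemma analytic_at0_pdiff0: "analytic_at0 f \<Longrightarrow> analytic_at0 (pdiff 0 f)"
proof -
  assume "analytic_at0 f"
  then obtain c r where r: "r > 0" "powser_conv c r" "\<And>p. p \<in> cube r \<Longrightarrow> f p = powser c p"
    using analytic_at0E by blast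
  show ?thesis
    by (rule analytic_at0I[OF r(1) powser_conv_coeff_dt[OF r(2)]])
      (use has_deriv_pdiff0_powser(2)[OF r(2,3)] in auto)
qed

lemma analytic_at0_comp_perm:
  fixes \<sigma> :: "real \<times> real \<times> real \<Rightarrow> real \<times> real \<times> real" and \<pi> :: "nat \<times> nat \<times> nat \<Rightarrow> nat \<times> nat \<times> nat"
  assumes "analytic_at0 f"
    and involution: "\<And>n. \<pi> (\<pi> n) = n"
    and cube: "\<And>r p. p \<in> cube r \<Longrightarrow> \<sigma> p \<in> cube r"
    and monom3: "\<And>n p. monom3 (\<pi> n) (\<sigma> p) = monom3 n p"
  shows "analytic_at0 (\<lambda>p. f (\<sigma> p))"
proof -
  obtain c r where r: "r > 0" "powser_conv c r" "\<And>p. p \<in> cube r \<Longrightarrow> f p = powser c p"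
    using assms analytic_at0E by blast
  have hs: "((\<lambda>n. c (\<pi> n) * monom3 n p) has_sum f (\<sigma> p)) UNIV" if "p \<in> cube r" for p
  proof -
    have "((\<lambda>n. c (\<pi> n) * monom3 n p) has_sum powser c (\<sigma> p)) UNIV \<longleftrightarrow>
        ((\<lambda>m. c m * monom3 m (\<sigma> p)) has_sum powser c (\<sigma> p)) UNIV"
      by (rule has_sum_reindex_bij_witness[where i = \<pi> and j = \<pi>]) (auto simp: involution monom3)
    then show ?thesis using powser_has_sum[OF r(2) cube[OF that]] r(3)[OF cube[OF that]] by simp
  qed
  show ?thesis
  proof (rule analytic_at0I[OF r(1) powser_convI[OF hs]])
    show "f (\<sigma> p) = powser (\<lambda>n. c (\<pi> n)) p" if "p \<in> cube r" for p
      using powser_eqI[OF hs[OF that]] by simp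
  qed
qed

definition swap_t_x1 :: "real \<times> real \<times> real \<Rightarrow> real \<times> real \<times> real" where
  "swap_t_x1 p = (fst (snd p), fst p, snd (snd p))"

definition swap_t_x2 :: "real \<times> real \<times> real \<Rightarrow> real \<times> real \<times> real" where
  "swap_t_x2 p = (snd (snd p), fst (snd p), fst p)"

lemma analytic_at0_comp_swap_t_x1: "analytic_at0 f \<Longrightarrow> analytic_at0 (\<lambda>p. f (swap_t_x1 p))"
  by (rule analytic_at0_comp_perm[where \<pi> = "\<lambda>n. (fst (snd n), fst n, snd (snd n))"])
    (auto simp: swap_t_x1_def monom3_def cube_def)

lemma analytic_at0_comp_swap_t_x2: "analytic_at0 f \<Longrightarrow> analytic_at0 (\<lambda>p. f (swap_t_x2 p))"
  by (rule analytic_at0_comp_perm[where \<pi> = "\<lambda>n. (snd (snd n), fst (snd n), fst n)"])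
    (auto simp: swap_t_x2_def monom3_def cube_def)

lemma pdiff1_eq_pdiff0_swap: "pdiff 1 f p = pdiff 0 (\<lambda>q. f (swap_t_x1 q)) (swap_t_x1 p)"
  by (cases p) (simp add: pdiff_def swap_t_x1_def)

lemma pdiff2_eq_pdiff0_swap: "pdiff 2 f p = pdiff 0 (\<lambda>q. f (swap_t_x2 q)) (swap_t_x2 p)"
  by (cases p) (simp add: pdiff_def swap_t_x2_def)

lemma analytic_at0_pdiff1: "analytic_at0 f \<Longrightarrow> analytic_at0 (pdiff 1 f)"
  unfolding pdiff1_eq_pdiff0_swap by (intro analytic_at0_comp_swap_t_x1 analytic_at0_pdiff0)

lemma analytic_at0_pdiff2: "analytic_at0 f \<Longrightarrow> analytic_at0 (pdiff 2 f)"
  unfolding pdiff2_eq_pdiff0_swap by (intro analytic_at0_comp_swap_t_x2 analytic_at0_pdiff0)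

subsection \<open>Inverses of units\<close>

lemma monom3_diag: "monom3 n (\<rho>, \<rho>, \<rho>) = \<rho> ^ (fst n + fst (snd n) + snd (snd n))"
  by (simp add: monom3_def power_add)

lemma abs_monom3_le_diag:
  assumes "p \<in> cube \<rho>" shows "\<bar>monom3 n p\<bar> \<le> monom3 n (\<rho>, \<rho>, \<rho>)"
proof -
  obtain t x y where pe: "p = (t, x, y)" by (cases p) auto
  obtain i j k where ne: "n = (i, j, k)" by (cases n) auto
  have "\<bar>t\<bar> ^ i * \<bar>x\<bar> ^ j * \<bar>y\<bar> ^ k \<le> \<rho> ^ i * \<rho> ^ j * \<rho> ^ k"
    using assms pe by (intro mult_mono power_mono) auto
  then show ?thesis by (simp add: pe ne abs_mult power_abs)
qed

lemma powser_conv_abs: "powser_conv c r \<Longrightarrow> powser_conv (\<lambda>n. \<bar>c n\<bar>) r"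
proof (erule powser_conv_dominated[OF _ inj_on_id])
  fix p assume p: "p \<in> cube r"
  obtain t x y where pe: "p = (t, x, y)" by (cases p) auto
  have "(\<bar>t\<bar>, \<bar>x\<bar>, \<bar>y\<bar>) \<in> cube r" using p pe by simp
  moreover have "\<forall>n. \<bar>\<bar>c n\<bar> * monom3 n p\<bar> \<le> 1 * \<bar>c (id n) * monom3 (id n) (\<bar>t\<bar>, \<bar>x\<bar>, \<bar>y\<bar>)\<bar>"
    by (simp add: pe monom3_def abs_mult power_abs)
  ultimately show "\<exists>q\<in>cube r. \<exists>K. \<forall>n. \<bar>\<bar>c n\<bar> * monom3 n p\<bar> \<le> K * \<bar>c (id n) * monom3 (id n) q\<bar>"
    by blast
qed

definition majorant :: "(nat \<times> nat \<times> nat \<Rightarrow> real) \<Rightarrow> real \<Rightarrow> real" where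
  "majorant c \<rho> = powser (\<lambda>n. \<bar>c n\<bar>) (\<rho>, \<rho>, \<rho>)"

lemma majorant_has_sum:
  "powser_conv c r \<Longrightarrow> 0 \<le> \<rho> \<Longrightarrow> \<rho> < r \<Longrightarrow>
    ((\<lambda>n. \<bar>c n\<bar> * monom3 n (\<rho>, \<rho>, \<rho>)) has_sum majorant c \<rho>) UNIV"
  unfolding majorant_def by (rule powser_has_sum[OF powser_conv_abs]) auto

lemma majorant_nonneg: "powser_conv c r \<Longrightarrow> 0 \<le> \<rho> \<Longrightarrow> \<rho> < r \<Longrightarrow> 0 \<le> majorant c \<rho>"
  using has_sum_nonneg[OF majorant_has_sum] by (simp add: monom3_diag)

lemma abs_powser_le_majorant:
  assumes "powser_conv c r" "\<rho> < r" "p \<in> cube \<rho>"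
  shows "\<bar>powser c p\<bar> \<le> majorant c \<rho>"
proof -
  have "0 \<le> \<rho>" using assms(3) by (cases p) (auto intro: order_trans[OF abs_ge_zero less_imp_le])
  have p: "p \<in> cube r" using cube_mono[OF _ assms(3)] assms(2) by simp
  have "\<bar>powser c p\<bar> \<le> (\<Sum>\<^sub>\<infinity>n. \<bar>c n * monom3 n p\<bar>)"
    using norm_infsum_bound[of "\<lambda>n. c n * monom3 n p" UNIV] powser_conv_abs_summable[OF assms(1) p]
    unfolding powser_def by simp
  also have "\<dots> \<le> majorant c \<rho>"
    using powser_conv_abs_summable[OF assms(1) p] majorant_has_sum[OF assms(1) \<open>0 \<le> \<rho>\<close> assms(2)]
      abs_monom3_le_diag[OF assms(3)]
    by (intro has_sum_mono[OF has_sum_infsum]) (auto simp: abs_mult mult_left_mono)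
  finally show ?thesis .
qed

lemma majorant_le_scaled:
  assumes "powser_conv c r" "c (0, 0, 0) = 0" "0 < \<rho>" "\<rho> \<le> \<rho>0" "\<rho>0 < r"
  shows "majorant c \<rho> \<le> (\<rho> / \<rho>0) * majorant c \<rho>0"
proof (rule has_sum_mono[OF majorant_has_sum has_sum_cmult_right[OF majorant_has_sum]])
  fix n :: "nat \<times> nat \<times> nat"
  show "\<bar>c n\<bar> * monom3 n (\<rho>, \<rho>, \<rho>) \<le> \<rho> / \<rho>0 * (\<bar>c n\<bar> * monom3 n (\<rho>0, \<rho>0, \<rho>0))"
  proof (cases "n = (0, 0, 0)")
    case False
    then obtain e where e: "fst n + fst (snd n) + snd (snd n) = Suc e"
      by (cases n) (auto simp: gr0_conv_Suc)
    have "\<rho> * \<rho> ^ e \<le> \<rho> * \<rho>0 ^ e"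
      using assms by (intro mult_left_mono power_mono) auto
    also have "\<dots> = \<rho> / \<rho>0 * (\<rho>0 * \<rho>0 ^ e)" using assms by (simp add: field_simps)
    finally have "\<bar>c n\<bar> * \<rho> ^ Suc e \<le> \<bar>c n\<bar> * (\<rho> / \<rho>0 * \<rho>0 ^ Suc e)"
      by (intro mult_left_mono) simp_all
    then show ?thesis using assms(3,4) by (simp add: monom3_diag e mult_ac)
  qed (use assms(2) in simp)
qed (use assms in auto)

lemma majorant_small:
  assumes "powser_conv b r" "b (0, 0, 0) = 0" "r > 0"
  obtains \<rho> where "0 < \<rho>" "\<rho> < r" "majorant b \<rho> \<le> 1 / 2"
proof -
  define \<rho>0 where "\<rho>0 = r / 2"
  define \<rho> where "\<rho> = min \<rho>0 (\<rho>0 / (2 * (\<bar>majorant b \<rho>0\<bar> + 1)))"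
  have \<rho>0: "0 < \<rho>0" "\<rho>0 < r" using assms by (auto simp: \<rho>0_def)
  have \<rho>: "0 < \<rho>" "\<rho> \<le> \<rho>0" using \<rho>0 by (auto simp: \<rho>_def)
  have "\<rho> / \<rho>0 \<le> 1 / (2 * (\<bar>majorant b \<rho>0\<bar> + 1))"
    using \<rho>0 by (simp add: \<rho>_def divide_simps)
  then have "(\<rho> / \<rho>0) * majorant b \<rho>0 \<le> 1 / (2 * (\<bar>majorant b \<rho>0\<bar> + 1)) * \<bar>majorant b \<rho>0\<bar>"
    using \<rho> \<rho>0 majorant_nonneg[OF assms(1) _ \<rho>0(2)] by (intro mult_mono) auto
  also have "\<dots> \<le> 1 / 2" by (simp add: field_simps)
  finally have "majorant b \<rho> \<le> 1 / 2"
    using majorant_le_scaled[OF assms(1,2) \<rho> \<rho>0(2)] by linarith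
  with \<rho> \<rho>0 show ?thesis by (intro that) auto
qed

lemma abs_cauchy_prod_le: "\<bar>cauchy_prod c d n\<bar> \<le> cauchy_prod (\<lambda>n. \<bar>c n\<bar>) (\<lambda>n. \<bar>d n\<bar>) n"
  unfolding cauchy_prod_def by (rule order_trans[OF sum_abs]) (simp add: abs_mult)

primrec cauchy_power :: "(nat \<times> nat \<times> nat \<Rightarrow> real) \<Rightarrow> nat \<Rightarrow> nat \<times> nat \<times> nat \<Rightarrow> real" where
  "cauchy_power b 0 = (\<lambda>n. if n = (0, 0, 0) then 1 else 0)"
| "cauchy_power b (Suc m) = cauchy_prod b (cauchy_power b m)"

lemma powser_conv_cauchy_power: "powser_conv b r \<Longrightarrow> powser_conv (cauchy_power b m) r"
  by (induction m) (auto simp: powser_conv_single intro: powser_conv_cauchy_prod)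

lemma powser_cauchy_power:
  "powser_conv b r \<Longrightarrow> p \<in> cube r \<Longrightarrow> powser (cauchy_power b m) p = powser b p ^ m"
  by (induction m) (auto simp: powser_single powser_cauchy_prod powser_conv_cauchy_power monom3_def)

lemma majorant_cauchy_power:
  assumes "powser_conv b r" "0 \<le> \<rho>" "\<rho> < r"
  shows "majorant (cauchy_power b m) \<rho> \<le> majorant b \<rho> ^ m"
proof (induction m)
  case 0
  have "(\<lambda>n. \<bar>cauchy_power b 0 n\<bar>) = (\<lambda>n. if n = (0, 0, 0) then 1 else 0)" by auto
  then show ?case by (simp add: majorant_def powser_single monom3_def)
next
  case (Suc m)
  let ?q = "(\<rho>, \<rho>, \<rho>)" and ?B = "\<lambda>n. \<bar>b n\<bar>" and ?P = "\<lambda>n. \<bar>cauchy_power b m n\<bar>"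
  have q: "?q \<in> cube r" using assms by simp
  have conv: "powser_conv ?B r" "powser_conv ?P r"
    using powser_conv_abs powser_conv_cauchy_power assms(1) by auto
  have "majorant (cauchy_power b (Suc m)) \<rho> \<le> powser (cauchy_prod ?B ?P) ?q"
  proof (rule has_sum_mono[OF majorant_has_sum[OF powser_conv_cauchy_power[OF assms(1)] assms(2,3)]
        powser_has_sum[OF powser_conv_cauchy_prod[OF conv] q]])
    show "\<bar>cauchy_power b (Suc m) n\<bar> * monom3 n ?q \<le> cauchy_prod ?B ?P n * monom3 n ?q" for n
      using abs_cauchy_prod_le[of b "cauchy_power b m" n] assms(2)
      by (simp add: mult_right_mono monom3_diag)
  qed
  also have "\<dots> = majorant b \<rho> * majorant (cauchy_power b m) \<rho>"
    unfolding majorant_def by (rule powser_cauchy_prod[OF conv q])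
  also have "\<dots> \<le> majorant b \<rho> * majorant b \<rho> ^ m"
    using Suc.IH majorant_nonneg[OF assms] by (rule mult_left_mono)
  finally show ?case by simp
qed

definition coeff_geometric :: "(nat \<times> nat \<times> nat \<Rightarrow> real) \<Rightarrow> nat \<times> nat \<times> nat \<Rightarrow> real" where
  "coeff_geometric b n = (\<Sum>\<^sub>\<infinity>m. cauchy_power b m n)"

lemma cauchy_powers_abs_summable:
  assumes "powser_conv b r" "0 < \<rho>" "\<rho> < r" "majorant b \<rho> \<le> 1 / 2"
  shows "(\<lambda>(m, n). \<bar>cauchy_power b m n\<bar> * monom3 n (\<rho>, \<rho>, \<rho>)) summable_on UNIV \<times> UNIV"
proof -
  have rows: "((\<lambda>n. \<bar>cauchy_power b m n\<bar> * monom3 n (\<rho>, \<rho>, \<rho>))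
      has_sum majorant (cauchy_power b m) \<rho>) UNIV" for m
    using majorant_has_sum[OF powser_conv_cauchy_power[OF assms(1)]] assms(2,3) by simp
  have "majorant (cauchy_power b m) \<rho> \<le> (1 / 2) ^ m" for m
  proof -
    have "majorant (cauchy_power b m) \<rho> \<le> majorant b \<rho> ^ m"
      using majorant_cauchy_power[OF assms(1) _ assms(3)] assms(2) by simp
    also have "\<dots> \<le> (1 / 2) ^ m"
      using assms(2) by (intro power_mono[OF assms(4) majorant_nonneg[OF assms(1) _ assms(3)]]) simp
    finally show ?thesis .
  qed
  moreover have "(\<lambda>m. (1 / 2 :: real) ^ m) summable_on UNIV"
    using summable_on_UNIV_nonneg_real_iff[of "\<lambda>m. (1 / 2 :: real) ^ m"]
      summable_geometric[of "1 / 2 :: real"] by simp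
  ultimately have "(\<lambda>m. majorant (cauchy_power b m) \<rho>) summable_on UNIV"
    using majorant_nonneg[OF powser_conv_cauchy_power[OF assms(1)] _ assms(3)] assms(2)
    by (elim summable_on_comparison_test) auto
  then show ?thesis
  proof (rule summable_on_SigmaI[rotated])
    show "((\<lambda>y. case (m, y) of (m, n) \<Rightarrow> \<bar>cauchy_power b m n\<bar> * monom3 n (\<rho>, \<rho>, \<rho>))
        has_sum majorant (cauchy_power b m) \<rho>) UNIV" for m
      using rows by simp
    show "0 \<le> (case (m, n) of (m, n) \<Rightarrow> \<bar>cauchy_power b m n\<bar> * monom3 n (\<rho>, \<rho>, \<rho>))" for m n
      using assms(2) by (simp add: monom3_diag)
  qed
qed

lemma cauchy_power_summable:
  assumes "powser_conv b r" "0 < \<rho>" "\<rho> < r" "majorant b \<rho> \<le> 1 / 2"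
  shows "(\<lambda>m. cauchy_power b m n) summable_on UNIV"
proof -
  define H where "H = (\<lambda>(m, n). \<bar>cauchy_power b m n\<bar> * monom3 n (\<rho>, \<rho>, \<rho>))"
  have "(\<lambda>(n, m). H (m, n)) summable_on UNIV \<times> UNIV"
    using cauchy_powers_abs_summable[OF assms] summable_on_swap[where f = H and A = UNIV and B = UNIV]
    by (simp add: H_def)
  then have "(\<lambda>m. \<bar>cauchy_power b m n\<bar> * monom3 n (\<rho>, \<rho>, \<rho>)) summable_on UNIV"
    using summable_on_SigmaD1[of "\<lambda>n m. H (m, n)" UNIV "\<lambda>_. UNIV" n]
    by (simp add: H_def case_prod_unfold)
  moreover have "monom3 n (\<rho>, \<rho>, \<rho>) \<noteq> 0" using assms(2) by (simp add: monom3_diag)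
  ultimately show ?thesis
    using summable_on_cmult_left'[of "monom3 n (\<rho>, \<rho>, \<rho>)" "\<lambda>m. \<bar>cauchy_power b m n\<bar>" UNIV]
    by (simp add: real_summable_on_absI)
qed

lemma has_sum_coeff_geometric:
  assumes "powser_conv b r" "0 < \<rho>" "\<rho> < r" "majorant b \<rho> \<le> 1 / 2" "p \<in> cube \<rho>"
  shows "((\<lambda>n. coeff_geometric b n * monom3 n p) has_sum 1 / (1 - powser b p)) UNIV"
proof -
  define G where "G = (\<lambda>(m, n). cauchy_power b m n * monom3 n p)"
  have p: "p \<in> cube r" using cube_mono[OF _ assms(5)] assms(3) by simp
  have abs_summable: "(\<lambda>(m, n). \<bar>cauchy_power b m n\<bar> * monom3 n (\<rho>, \<rho>, \<rho>)) summable_on UNIV \<times> UNIV"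
    by (rule cauchy_powers_abs_summable[OF assms(1-4)])
  have "G summable_on UNIV \<times> UNIV"
  proof (rule real_summable_on_absI, rule summable_on_comparison_test[OF abs_summable])
    show "\<bar>G x\<bar> \<le> (case x of (m, n) \<Rightarrow> \<bar>cauchy_power b m n\<bar> * monom3 n (\<rho>, \<rho>, \<rho>))" for x
      using abs_monom3_le_diag[OF assms(5)]
      by (simp add: G_def case_prod_unfold abs_mult mult_left_mono)
  qed simp
  then have G: "(G has_sum infsum G (UNIV \<times> UNIV)) (UNIV \<times> UNIV)"
    by (rule has_sum_infsum)
  \<comment> \<open>Summing over the powers first gives the geometric series of powser b p ...\<close>
  have "((\<lambda>m. powser b p ^ m) has_sum infsum G (UNIV \<times> UNIV)) UNIV"
    using G by (rule has_sum_Sigma')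
      (use powser_has_sum[OF powser_conv_cauchy_power[OF assms(1)] p]
        powser_cauchy_power[OF assms(1) p] in \<open>simp add: G_def\<close>)
  moreover have "\<bar>powser b p\<bar> < 1"
    using abs_powser_le_majorant[OF assms(1,3,5)] assms(4) by simp
  ultimately have sum: "infsum G (UNIV \<times> UNIV) = 1 / (1 - powser b p)"
    using geometric_sums[of "powser b p"] has_sum_imp_sums sums_unique2 by fastforce
  \<comment> \<open>... while summing over the monomials first gives the series of coeff_geometric b.\<close>
  have "((\<lambda>n. coeff_geometric b n * monom3 n p) has_sum infsum G (UNIV \<times> UNIV)) UNIV"
  proof (rule has_sum_Sigma'[OF has_sum_swap[THEN iffD1, OF G]])
    show "((\<lambda>m. case (n, m) of (n, m) \<Rightarrow> G (m, n)) has_sum coeff_geometric b n * monom3 n p) UNIV" for n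
      using has_sum_cmult_left[OF has_sum_infsum[OF cauchy_power_summable[OF assms(1-4), of n]], of "monom3 n p"]
      by (simp add: G_def coeff_geometric_def)
  qed
  then show ?thesis unfolding sum .
qed

lemma powser_at_zero: "powser c (0, 0, 0) = c (0, 0, 0)"
proof (rule powser_eqI, rule has_sum_finite_neutralI[of "{(0, 0, 0)}"])
  show "c n * monom3 n (0, 0, 0) = 0" if "n \<in> UNIV - {(0, 0, 0)}" for n
    using that by (cases n) (auto simp: zero_power)
qed simp_all

lemma analytic_at0_inverse:
  assumes "analytic_at0 f" "f (0, 0, 0) \<noteq> 0"
  obtains g where "analytic_at0 g" "germ_eq (\<lambda>p. g p * f p) (\<lambda>_. 1)"
proof -
  obtain c r where r: "r > 0" "powser_conv c r" "\<And>p. p \<in> cube r \<Longrightarrow> f p = powser c p"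
    using assms(1) analytic_at0E by blast
  define a where "a = f (0, 0, 0)"
  have a: "a = c (0, 0, 0)" "a \<noteq> 0"
    using r(1) r(3)[of "(0, 0, 0)"] assms(2) by (simp_all add: a_def powser_at_zero)
  define b where "b n = (-1 / a) * (c n + (if n = (0, 0, 0) then -a else 0))" for n
  have b: "powser_conv b r" "b (0, 0, 0) = 0"
    unfolding b_def by (intro powser_conv_cmult powser_conv_add r(2) powser_conv_single) (simp add: a)
  have f: "f p = a * (1 - powser b p)" if "p \<in> cube r" for p
    using that a(2) r(3)[OF that] unfolding b_def powser_cmult powser_add[OF r(2) powser_conv_single that]
    by (cases p) (simp add: powser_single field_simps)
  obtain \<rho> where \<rho>: "0 < \<rho>" "\<rho> < r" "majorant b \<rho> \<le> 1 / 2"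
    using majorant_small[OF b r(1)] by blast
  have "powser_conv (coeff_geometric b) \<rho>"
    using has_sum_coeff_geometric[OF b(1) \<rho>] by (rule powser_convI)
  then have "analytic_at0 (powser (coeff_geometric b))"
    by (rule analytic_at0I[OF \<rho>(1)]) (rule refl)
  then have "analytic_at0 (\<lambda>p. (1 / a) * powser (coeff_geometric b) p)"
    by (rule analytic_at0_cmult)
  moreover have "germ_eq (\<lambda>p. (1 / a) * powser (coeff_geometric b) p * f p) (\<lambda>_. 1)"
  proof (rule germ_eqI[OF \<rho>(1)])
    fix p assume p: "p \<in> cube \<rho>"
    have "\<bar>powser b p\<bar> < 1"
      using abs_powser_le_majorant[OF b(1) \<rho>(2) p] \<rho>(3) by simp
    then show "(1 / a) * powser (coeff_geometric b) p * f p = 1"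
      using powser_eqI[OF has_sum_coeff_geometric[OF b(1) \<rho> p]] f[OF cube_mono[OF _ p]] \<rho>(2) a(2)
      by simp
  qed
  ultimately show ?thesis by (rule that)
qed

lemma germ_eq_at0: "germ_eq f g \<Longrightarrow> f (0, 0, 0) = g (0, 0, 0)"
  unfolding germ_eq_def by (rule eventually_nhds_x_imp_x)

lemma germ_eq_sym: "germ_eq f g \<Longrightarrow> germ_eq g f"
  unfolding germ_eq_def by (auto elim: eventually_mono)

lemma in_ideal_cong:
  assumes "germ_eq f g" "in_ideal ws f" shows "in_ideal ws g"
proof -
  obtain a where a: "\<forall>i<length ws. analytic_at0 (a i)"
    "germ_eq f (\<lambda>p. \<Sum>i<length ws. a i p * (ws ! i) p)"
    using assms(2) unfolding in_ideal_def by blast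
  have "germ_eq g (\<lambda>p. \<Sum>i<length ws. a i p * (ws ! i) p)"
    using assms(1) a(2) unfolding germ_eq_def by (auto elim: eventually_elim2)
  then show ?thesis using a(1) unfolding in_ideal_def by blast
qed

lemma in_ideal_zero: "in_ideal ws (\<lambda>p. 0)"
  unfolding in_ideal_def germ_eq_def by (intro exI[of _ "\<lambda>i p. 0"]) (simp add: analytic_at0_const)

lemma in_ideal_add:
  assumes "in_ideal ws f" "in_ideal ws g" shows "in_ideal ws (\<lambda>p. f p + g p)"
proof -
  obtain a where a: "\<forall>i<length ws. analytic_at0 (a i)"
    "germ_eq f (\<lambda>p. \<Sum>i<length ws. a i p * (ws ! i) p)"
    using assms(1) unfolding in_ideal_def by blast
  obtain b where b: "\<forall>i<length ws. analytic_at0 (b i)"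
    "germ_eq g (\<lambda>p. \<Sum>i<length ws. b i p * (ws ! i) p)"
    using assms(2) unfolding in_ideal_def by blast
  have "germ_eq (\<lambda>p. f p + g p) (\<lambda>p. \<Sum>i<length ws. (a i p + b i p) * (ws ! i) p)"
    using a(2) b(2) unfolding germ_eq_def
    by (auto elim: eventually_elim2 simp: distrib_right sum.distrib)
  then show ?thesis
    unfolding in_ideal_def using a(1) b(1) by (intro exI[of _ "\<lambda>i p. a i p + b i p"]) (simp add: analytic_at0_add)
qed

lemma in_ideal_mult:
  assumes "analytic_at0 m" "in_ideal ws f" shows "in_ideal ws (\<lambda>p. m p * f p)"
proof -
  obtain a where a: "\<forall>i<length ws. analytic_at0 (a i)"
    "germ_eq f (\<lambda>p. \<Sum>i<length ws. a i p * (ws ! i) p)"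
    using assms(2) unfolding in_ideal_def by blast
  have "germ_eq (\<lambda>p. m p * f p) (\<lambda>p. \<Sum>i<length ws. m p * a i p * (ws ! i) p)"
    using a(2) unfolding germ_eq_def by (auto elim: eventually_mono simp: sum_distrib_left mult.assoc)
  then show ?thesis
    unfolding in_ideal_def using a(1) assms(1)
    by (intro exI[of _ "\<lambda>i p. m p * a i p"]) (simp add: analytic_at0_mult)
qed

lemma in_ideal_sum:
  "finite I \<Longrightarrow> (\<And>i. i \<in> I \<Longrightarrow> in_ideal ws (f i)) \<Longrightarrow> in_ideal ws (\<lambda>p. \<Sum>i\<in>I. f i p)"
  by (induction I rule: finite_induct) (auto intro: in_ideal_zero in_ideal_add)

lemma in_ideal_gen:
  assumes "w \<in> set ws" "analytic_at0 m" shows "in_ideal ws (\<lambda>p. m p * w p)"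
proof -
  obtain i where i: "i < length ws" "ws ! i = w" using assms(1) by (auto simp: in_set_conv_nth)
  have "(\<Sum>j<length ws. (if j = i then m p else 0) * (ws ! j) p) = m p * w p" for p
    using i by (simp add: if_distrib[of "\<lambda>x. x * _"] cong: if_cong)
  moreover have "analytic_at0 (\<lambda>p. if j = i then m p else 0)" for j
    using assms(2) analytic_at0_const[of 0] by (cases "j = i") simp_all
  ultimately show ?thesis
    unfolding in_ideal_def germ_eq_def by (intro exI[of _ "\<lambda>j p. if j = i then m p else 0"]) simp
qed

lemma in_ideal_gen_self: "w \<in> set ws \<Longrightarrow> in_ideal ws w"
  using in_ideal_gen[OF _ analytic_at0_const[of 1]] by simp

lemma in_ideal_mono:
  assumes "\<forall>w\<in>set ws. in_ideal ws' w" "in_ideal ws f"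
  shows "in_ideal ws' f"
proof -
  obtain a where a: "\<forall>i<length ws. analytic_at0 (a i)"
    "germ_eq f (\<lambda>p. \<Sum>i<length ws. a i p * (ws ! i) p)"
    using assms(2) unfolding in_ideal_def by blast
  have "in_ideal ws' (\<lambda>p. \<Sum>i<length ws. a i p * (ws ! i) p)"
    using assms(1) a(1) by (intro in_ideal_sum in_ideal_mult) auto
  then show ?thesis
    using germ_eq_sym[OF a(2)] by (rule in_ideal_cong[rotated])
qed

lemma in_ideal_comp_tsq:
  assumes "\<forall>w\<in>set ws. in_ideal ws' (\<lambda>p. m p * w (tsq p))" "in_ideal ws f"
  shows "in_ideal ws' (\<lambda>p. m p * f (tsq p))"
proof -
  obtain a where a: "\<forall>i<length ws. analytic_at0 (a i)"
    "germ_eq f (\<lambda>p. \<Sum>i<length ws. a i p * (ws ! i) p)"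
    using assms(2) unfolding in_ideal_def by blast
  have "in_ideal ws' (\<lambda>p. a i (tsq p) * (m p * (ws ! i) (tsq p)))" if "i < length ws" for i
    by (rule in_ideal_mult[OF analytic_at0_comp_tsq]) (use assms(1) a(1) that in auto)
  then have "in_ideal ws' (\<lambda>p. \<Sum>i<length ws. a i (tsq p) * (m p * (ws ! i) (tsq p)))"
    by (intro in_ideal_sum) auto
  moreover have "germ_eq (\<lambda>p. \<Sum>i<length ws. a i (tsq p) * (m p * (ws ! i) (tsq p)))
      (\<lambda>p. m p * f (tsq p))"
    using germ_eq_comp_tsq[OF a(2)] unfolding germ_eq_def
    by (auto elim: eventually_mono simp: sum_distrib_left mult_ac)
  ultimately show ?thesis by (rule in_ideal_cong[rotated])
qed

lemma in_ideal_Cons: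
  assumes "in_ideal (w # ws) f"
  obtains a g where "analytic_at0 a" "in_ideal ws g" "germ_eq f (\<lambda>p. a p * w p + g p)"
proof -
  obtain a where a: "\<forall>i<length (w # ws). analytic_at0 (a i)"
    "germ_eq f (\<lambda>p. \<Sum>i<length (w # ws). a i p * ((w # ws) ! i) p)"
    using assms unfolding in_ideal_def by blast
  have "in_ideal ws (\<lambda>p. \<Sum>i<length ws. a (Suc i) p * (ws ! i) p)"
    unfolding in_ideal_def germ_eq_def using a(1) by (intro exI[of _ "\<lambda>i. a (Suc i)"]) auto
  moreover have "germ_eq f (\<lambda>p. a 0 p * w p + (\<Sum>i<length ws. a (Suc i) p * (ws ! i) p))"
    using a(2) by (simp only: length_Cons sum.lessThan_Suc_shift nth_Cons_0 nth_Cons_Suc)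
  ultimately show ?thesis using a(1) that by auto
qed

lemma proper_idealI:
  assumes "\<forall>w\<in>set ws. w (0, 0, 0) = 0" shows "proper_ideal ws"
  unfolding proper_ideal_def in_ideal_def
proof
  assume "\<exists>a. (\<forall>i<length ws. analytic_at0 (a i)) \<and>
    germ_eq (\<lambda>_. 1) (\<lambda>p. \<Sum>i<length ws. a i p * (ws ! i) p)"
  then obtain a where "1 = (\<Sum>i<length ws. a i (0, 0, 0) * (ws ! i) (0, 0, 0))"
    by (auto dest: germ_eq_at0)
  also have "\<dots> = 0" using assms by (intro sum.neutral) (simp add: nth_mem)
  finally show False by simp
qed

lemma proper_ideal_gen_vanishes:
  assumes "proper_ideal ws" "w \<in> set ws" "analytic_at0 w"
  shows "w (0, 0, 0) = 0"
proof (rule ccontr)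
  assume "w (0, 0, 0) \<noteq> 0"
  then obtain g where "analytic_at0 g" "germ_eq (\<lambda>p. g p * w p) (\<lambda>_. 1)"
    using analytic_at0_inverse[OF assms(3)] by blast
  then have "in_ideal ws (\<lambda>_. 1)" using in_ideal_gen[OF assms(2)] in_ideal_cong by blast
  then show False using assms(1) unfolding proper_ideal_def by simp
qed

subsection \<open>Spans modulo an ideal\<close>

definition span_mod ::
    "(real \<times> real \<times> real \<Rightarrow> real) list \<Rightarrow> (real \<times> real \<times> real \<Rightarrow> real) set \<Rightarrow>
      (real \<times> real \<times> real \<Rightarrow> real) \<Rightarrow> bool" where
  "span_mod ws E f \<longleftrightarrow> (\<exists>u. in_ideal ws (\<lambda>p. f p - (\<Sum>e\<in>E. u e * e p)))"

lemma finite_codim_iff_span_mod: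
  "finite_codim ws \<longleftrightarrow>
    (\<exists>E. finite E \<and> (\<forall>e\<in>E. analytic_at0 e) \<and> (\<forall>h. analytic_at0 h \<longrightarrow> span_mod ws E h))"
  unfolding finite_codim_def span_mod_def ..

lemma span_mod_ideal: "in_ideal ws f \<Longrightarrow> span_mod ws E f"
  unfolding span_mod_def by (intro exI[of _ "\<lambda>e. 0"]) simp

lemma span_mod_elem:
  assumes "finite E" "e \<in> E" shows "span_mod ws E e"
proof -
  have "(\<Sum>e'\<in>E. (if e' = e then 1 else 0) * e' p) = e p" for p
    using assms by (simp add: if_distrib[of "\<lambda>x. x * _"] cong: if_cong)
  then show ?thesis
    unfolding span_mod_def by (intro exI[of _ "\<lambda>e'. if e' = e then 1 else 0"]) (simp add: in_ideal_zero)
qed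

lemma span_mod_add:
  assumes "span_mod ws E f" "span_mod ws E g" shows "span_mod ws E (\<lambda>p. f p + g p)"
proof -
  obtain u v where "in_ideal ws (\<lambda>p. f p - (\<Sum>e\<in>E. u e * e p))"
    "in_ideal ws (\<lambda>p. g p - (\<Sum>e\<in>E. v e * e p))"
    using assms unfolding span_mod_def by blast
  from in_ideal_add[OF this] have "in_ideal ws (\<lambda>p. (f p + g p) - (\<Sum>e\<in>E. (u e + v e) * e p))"
    by (simp add: distrib_right sum.distrib algebra_simps)
  then show ?thesis unfolding span_mod_def by (intro exI[of _ "\<lambda>e. u e + v e"])
qed

lemma span_mod_cmult:
  assumes "span_mod ws E f" shows "span_mod ws E (\<lambda>p. a * f p)"
proof -
  obtain u where "in_ideal ws (\<lambda>p. f p - (\<Sum>e\<in>E. u e * e p))"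
    using assms unfolding span_mod_def by blast
  from in_ideal_mult[OF analytic_at0_const[of a] this]
  have "in_ideal ws (\<lambda>p. a * f p - (\<Sum>e\<in>E. (a * u e) * e p))"
    by (simp add: sum_distrib_left algebra_simps)
  then show ?thesis unfolding span_mod_def by (intro exI[of _ "\<lambda>e. a * u e"])
qed

lemma span_mod_sum:
  assumes "finite F" "\<And>e. e \<in> F \<Longrightarrow> span_mod ws E (P e)"
  shows "span_mod ws E (\<lambda>p. \<Sum>e\<in>F. u e * P e p)"
  using assms
proof (induction F rule: finite_induct)
  case empty
  then show ?case by (simp add: span_mod_ideal in_ideal_zero)
next
  case (insert x F)
  then show ?case by (simp add: span_mod_add span_mod_cmult)
qed

lemma span_mod_cong:
  assumes "germ_eq f g" "span_mod ws E f" shows "span_mod ws E g"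
proof -
  obtain u where u: "in_ideal ws (\<lambda>p. f p - (\<Sum>e\<in>E. u e * e p))"
    using assms(2) unfolding span_mod_def by blast
  have "germ_eq (\<lambda>p. f p - (\<Sum>e\<in>E. u e * e p)) (\<lambda>p. g p - (\<Sum>e\<in>E. u e * e p))"
    using assms(1) unfolding germ_eq_def by (auto elim: eventually_mono)
  with u show ?thesis unfolding span_mod_def by (blast intro: in_ideal_cong)
qed

lemma span_mod_Cons_trans:
  assumes "span_mod (w # ws) E f" "finite E'" "E \<subseteq> E'"
    and "\<And>a. analytic_at0 a \<Longrightarrow> span_mod ws' E' (\<lambda>p. a p * w p)"
    and "\<forall>v\<in>set ws. in_ideal ws' v"
  shows "span_mod ws' E' f"
proof -
  obtain u where "in_ideal (w # ws) (\<lambda>p. f p - (\<Sum>e\<in>E. u e * e p))"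
    using assms(1) unfolding span_mod_def by blast
  then obtain a g where a: "analytic_at0 a" and g: "in_ideal ws g"
    and f: "germ_eq (\<lambda>p. f p - (\<Sum>e\<in>E. u e * e p)) (\<lambda>p. a p * w p + g p)"
    by (rule in_ideal_Cons)
  have "finite E" using assms(2,3) by (rule rev_finite_subset)
  have "span_mod ws' E' (\<lambda>p. \<Sum>e\<in>E. u e * e p)"
    using assms(2,3) \<open>finite E\<close> by (intro span_mod_sum) (auto intro: span_mod_elem)
  moreover have "span_mod ws' E' (\<lambda>p. a p * w p + g p)"
    by (intro span_mod_add assms(4)[OF a] span_mod_ideal in_ideal_mono[OF assms(5) g])
  ultimately have "span_mod ws' E' (\<lambda>p. (\<Sum>e\<in>E. u e * e p) + (a p * w p + g p))"
    by (rule span_mod_add)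
  moreover have "germ_eq (\<lambda>p. (\<Sum>e\<in>E. u e * e p) + (a p * w p + g p)) f"
    using f unfolding germ_eq_def by (auto elim: eventually_mono)
  ultimately show ?thesis by (rule span_mod_cong[rotated])
qed

lemma finite_codim_mono:
  assumes "finite_codim ws" "\<forall>w\<in>set ws. in_ideal ws' w"
  shows "finite_codim ws'"
  using assms in_ideal_mono unfolding finite_codim_iff_span_mod span_mod_def by meson

lemma span_mod_comp_tsq:
  assumes "span_mod ws E f" "\<forall>w\<in>set ws. in_ideal ws' (\<lambda>p. fst p * w (tsq p))" "analytic_at0 m"
    and "finite E" "finite E'" "\<And>e. e \<in> E \<Longrightarrow> (\<lambda>p. m p * (fst p * e (tsq p))) \<in> E'"
  shows "span_mod ws' E' (\<lambda>p. m p * (fst p * f (tsq p)))"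
proof -
  obtain u where "in_ideal ws (\<lambda>p. f p - (\<Sum>e\<in>E. u e * e p))"
    using assms(1) unfolding span_mod_def by blast
  from in_ideal_mult[OF assms(3) in_ideal_comp_tsq[OF assms(2) this]]
  have "span_mod ws' E' (\<lambda>p. m p * (fst p * (f (tsq p) - (\<Sum>e\<in>E. u e * e (tsq p)))))"
    by (rule span_mod_ideal)
  moreover have "span_mod ws' E' (\<lambda>p. \<Sum>e\<in>E. u e * (m p * (fst p * e (tsq p))))"
    using assms(4-6) by (intro span_mod_sum span_mod_elem)
  ultimately have "span_mod ws' E' (\<lambda>p. m p * (fst p * (f (tsq p) - (\<Sum>e\<in>E. u e * e (tsq p)))) +
      (\<Sum>e\<in>E. u e * (m p * (fst p * e (tsq p)))))"
    by (rule span_mod_add)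
  then show ?thesis by (simp add: sum_distrib_left algebra_simps)
qed

lemma span_mod_t_mult:
  assumes "\<And>h. analytic_at0 h \<Longrightarrow> span_mod ws E h" "finite E"
    and "\<forall>w\<in>set ws. in_ideal ws' (\<lambda>p. fst p * w (tsq p))"
    and "finite E'" "\<And>e. e \<in> E \<Longrightarrow> (\<lambda>p. fst p * e (tsq p)) \<in> E'"
      "\<And>e. e \<in> E \<Longrightarrow> (\<lambda>p. fst p * (fst p * e (tsq p))) \<in> E'"
    and "analytic_at0 k"
  shows "span_mod ws' E' (\<lambda>p. fst p * k p)"
proof -
  obtain fe fo where fe: "analytic_at0 fe" "analytic_at0 fo"
    "germ_eq k (\<lambda>p. fe (tsq p) + fst p * fo (tsq p))"
    using analytic_at0_even_odd[OF assms(7)] by blast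
  have "(\<lambda>p. 1 * (fst p * e (tsq p))) \<in> E'" if "e \<in> E" for e
    using assms(5)[OF that] by simp
  then have "span_mod ws' E' (\<lambda>p. 1 * (fst p * fe (tsq p)) + fst p * (fst p * fo (tsq p)))"
    by (intro span_mod_add span_mod_comp_tsq[OF assms(1) assms(3) _ assms(2,4)] fe
        analytic_at0_const analytic_at0_fst assms(6))
  moreover have "germ_eq (\<lambda>p. 1 * (fst p * fe (tsq p)) + fst p * (fst p * fo (tsq p))) (\<lambda>p. fst p * k p)"
    using fe(3) unfolding germ_eq_def by (auto elim: eventually_mono simp: algebra_simps)
  ultimately show ?thesis by (rule span_mod_cong[rotated])
qed

subsection \<open>The ideals of the curve and of its double cover\<close>

definition jac_minor ::
    "(real \<times> real \<times> real \<Rightarrow> real) \<Rightarrow> (real \<times> real \<times> real \<Rightarrow> real) \<Rightarrow> nat \<Rightarrow> nat \<Rightarrow>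
      real \<times> real \<times> real \<Rightarrow> real" where
  "jac_minor f1 f2 k l = (\<lambda>p. pdiff k f1 p * pdiff l f2 p - pdiff l f1 p * pdiff k f2 p)"

definition jac_gens ::
    "(real \<times> real \<times> real \<Rightarrow> real) \<Rightarrow> (real \<times> real \<times> real \<Rightarrow> real) \<Rightarrow>
      (real \<times> real \<times> real \<Rightarrow> real) list" where
  "jac_gens f1 f2 = [f1, f2] @ jac_minors [f1, f2]"

lemma curve_ais_iff: "curve_ais [f1, f2] \<longleftrightarrow> proper_ideal (jac_gens f1 f2) \<and> finite_codim (jac_gens f1 f2)"
  by (simp add: curve_ais_def jac_gens_def)

lemma set_jac_gens:
  "set (jac_gens f1 f2) = {f1, f2, jac_minor f1 f2 0 1, jac_minor f1 f2 0 2, jac_minor f1 f2 1 2}"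
  by (simp add: jac_gens_def jac_minors_def jac_minor_def eval_nat_numeral upt_rec)

lemma analytic_at0_jac_minor_x:
  "analytic_at0 f1 \<Longrightarrow> analytic_at0 f2 \<Longrightarrow> analytic_at0 (jac_minor f1 f2 1 2)"
  unfolding jac_minor_def
  by (intro analytic_at0_diff analytic_at0_mult analytic_at0_pdiff1 analytic_at0_pdiff2)

lemma pdiff_comp_tsq: "k \<noteq> 0 \<Longrightarrow> pdiff k (g \<circ> tsq) p = pdiff k g (tsq p)"
  by (cases p) (simp add: pdiff_def)

lemma pdiff0_comp_tsq:
  assumes "analytic_at0 g"
  shows "germ_eq (pdiff 0 (g \<circ> tsq)) (\<lambda>p. 2 * fst p * pdiff 0 g (tsq p))"
proof -
  obtain r where r: "r > 0"
    "\<And>t x y. (t, x, y) \<in> cube r \<Longrightarrow> ((\<lambda>s. g (s, x, y)) has_real_derivative pdiff 0 g (t, x, y)) (at t)"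
    using analytic_at0_has_pdiff0[OF assms] by blast
  show ?thesis
  proof (rule germ_eqI[of "min r 1"])
    fix p assume p: "p \<in> cube (min r 1)"
    obtain t x y where pe: "p = (t, x, y)" by (cases p) auto
    have "((\<lambda>s. g (s\<^sup>2, x, y)) has_real_derivative pdiff 0 g (t\<^sup>2, x, y) * (2 * t)) (at t)"
      using DERIV_chain2[OF r(2) DERIV_pow[of 2 t]] tsq_in_cube[OF p] pe by simp
    then show "pdiff 0 (g \<circ> tsq) p = 2 * fst p * pdiff 0 g (tsq p)"
      by (simp add: pe pdiff_def DERIV_imp_deriv)
  qed (use r in simp)
qed

lemma jac_minor_t_comp_tsq:
  assumes "analytic_at0 g1" "analytic_at0 g2" "l \<noteq> 0"
  shows "germ_eq (jac_minor (g1 \<circ> tsq) (g2 \<circ> tsq) 0 l) (\<lambda>p. 2 * fst p * jac_minor g1 g2 0 l (tsq p))"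
  using pdiff0_comp_tsq[OF assms(1)] pdiff0_comp_tsq[OF assms(2)] assms(3)
  unfolding germ_eq_def jac_minor_def
  by (auto elim: eventually_elim2 simp: pdiff_comp_tsq algebra_simps)

lemma jac_minor_x_comp_tsq:
  "k \<noteq> 0 \<Longrightarrow> l \<noteq> 0 \<Longrightarrow> jac_minor (g1 \<circ> tsq) (g2 \<circ> tsq) k l p = jac_minor g1 g2 k l (tsq p)"
  by (simp add: jac_minor_def pdiff_comp_tsq)

lemma jac_gens_comp_tsq:
  assumes "analytic_at0 g1" "analytic_at0 g2"
  shows "\<forall>w\<in>set (jac_gens g1 g2). in_ideal (jac_gens (g1 \<circ> tsq) (g2 \<circ> tsq)) (\<lambda>p. fst p * w (tsq p))"
proof -
  let ?W' = "jac_gens (g1 \<circ> tsq) (g2 \<circ> tsq)"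
  have t_gen: "in_ideal ?W' (\<lambda>p. fst p * w' p)" if "w' \<in> set ?W'" for w'
    using in_ideal_gen[OF that analytic_at0_fst] by simp
  have "in_ideal ?W' (\<lambda>p. fst p * jac_minor g1 g2 0 l (tsq p))" if "l = 1 \<or> l = 2" for l
  proof (rule in_ideal_cong)
    show "in_ideal ?W' (\<lambda>p. 1 / 2 * jac_minor (g1 \<circ> tsq) (g2 \<circ> tsq) 0 l p)"
      using that by (intro in_ideal_gen analytic_at0_const) (auto simp: set_jac_gens)
    have "l \<noteq> 0" using that by auto
    from jac_minor_t_comp_tsq[OF assms this]
    show "germ_eq (\<lambda>p. 1 / 2 * jac_minor (g1 \<circ> tsq) (g2 \<circ> tsq) 0 l p)
        (\<lambda>p. fst p * jac_minor g1 g2 0 l (tsq p))"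
      unfolding germ_eq_def by (rule eventually_mono) simp
  qed
  then show ?thesis
    using t_gen[of "g1 \<circ> tsq"] t_gen[of "g2 \<circ> tsq"] t_gen[of "jac_minor (g1 \<circ> tsq) (g2 \<circ> tsq) 1 2"]
    by (simp add: set_jac_gens jac_minor_x_comp_tsq)
qed

lemma sub_comp_tsq_factor:
  assumes "analytic_at0 g"
  obtains d where "analytic_at0 d" "germ_eq (\<lambda>p. g p - g (tsq p)) (\<lambda>p. fst p * d p)"
proof -
  obtain h where h: "analytic_at0 h" "germ_eq g (\<lambda>(t, x, y). g (0, x, y) + t * h (t, x, y))"
    using analytic_at0_split_t0[OF assms] by blast
  have "analytic_at0 (\<lambda>p. h p - fst p * h (tsq p))"
    by (intro analytic_at0_diff analytic_at0_mult h(1) analytic_at0_fst analytic_at0_comp_tsq)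
  moreover have "germ_eq (\<lambda>p. g p - g (tsq p)) (\<lambda>p. fst p * (h p - fst p * h (tsq p)))"
    using h(2) germ_eq_comp_tsq[OF h(2)] unfolding germ_eq_def
    by (auto elim: eventually_elim2 simp: algebra_simps power2_eq_square)
  ultimately show ?thesis by (rule that)
qed

lemma finite_codim_t_comp_tsq:
  assumes "analytic_at0 g1" "analytic_at0 g2" "finite_codim [fst, g1, g2]"
  shows "finite_codim [fst, g1 \<circ> tsq, g2 \<circ> tsq]"
proof (rule finite_codim_mono[OF assms(3)])
  have "in_ideal [fst, g1 \<circ> tsq, g2 \<circ> tsq] g"
    if g: "analytic_at0 g" "g \<circ> tsq \<in> {g1 \<circ> tsq, g2 \<circ> tsq}" for g
  proof -
    obtain d where d: "analytic_at0 d" "germ_eq (\<lambda>p. g p - g (tsq p)) (\<lambda>p. fst p * d p)"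
      using sub_comp_tsq_factor[OF g(1)] by blast
    have "in_ideal [fst, g1 \<circ> tsq, g2 \<circ> tsq] (\<lambda>p. d p * fst p)"
      by (rule in_ideal_gen) (simp_all add: d(1))
    moreover have "in_ideal [fst, g1 \<circ> tsq, g2 \<circ> tsq] (\<lambda>p. 1 * (g \<circ> tsq) p)"
      using in_ideal_gen[of "g \<circ> tsq" "[fst, g1 \<circ> tsq, g2 \<circ> tsq]" "\<lambda>_. 1"] g(2) analytic_at0_const
      by auto
    ultimately have "in_ideal [fst, g1 \<circ> tsq, g2 \<circ> tsq] (\<lambda>p. d p * fst p + 1 * (g \<circ> tsq) p)"
      by (rule in_ideal_add)
    moreover have "germ_eq (\<lambda>p. d p * fst p + 1 * (g \<circ> tsq) p) g"
      using d(2) unfolding germ_eq_def by (auto elim: eventually_mono simp: algebra_simps)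
    ultimately show ?thesis by (rule in_ideal_cong[rotated])
  qed
  then show "\<forall>w\<in>set [fst, g1, g2]. in_ideal [fst, g1 \<circ> tsq, g2 \<circ> tsq] w"
    using assms(1,2) by (auto intro: in_ideal_gen_self)
qed

lemma finite_codim_jac_gens_comp_tsq:
  assumes "analytic_at0 g1" "analytic_at0 g2" "finite_codim (jac_gens g1 g2)"
    and "finite_codim [fst, g1 \<circ> tsq, g2 \<circ> tsq]"
  shows "finite_codim (jac_gens (g1 \<circ> tsq) (g2 \<circ> tsq))"
proof -
  obtain E where E: "finite E" "\<forall>e\<in>E. analytic_at0 e"
      "\<And>h. analytic_at0 h \<Longrightarrow> span_mod (jac_gens g1 g2) E h"
    using assms(3) unfolding finite_codim_iff_span_mod by blast
  obtain E0 where E0: "finite E0" "\<forall>e\<in>E0. analytic_at0 e"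
      "\<And>h. analytic_at0 h \<Longrightarrow> span_mod [fst, g1 \<circ> tsq, g2 \<circ> tsq] E0 h"
    using assms(4) unfolding finite_codim_iff_span_mod by blast
  define E' where
    "E' = E0 \<union> (\<lambda>e p. fst p * e (tsq p)) ` E \<union> (\<lambda>e p. fst p * (fst p * e (tsq p))) ` E"
  have "finite E'" using E(1) E0(1) by (simp add: E'_def)
  moreover have "\<forall>e\<in>E'. analytic_at0 e"
    using E(2) E0(2) unfolding E'_def
    by (auto intro!: analytic_at0_mult analytic_at0_const analytic_at0_fst analytic_at0_comp_tsq)
  moreover have "span_mod (jac_gens (g1 \<circ> tsq) (g2 \<circ> tsq)) E' h" if "analytic_at0 h" for h
  proof (rule span_mod_Cons_trans[OF E0(3)[OF that] \<open>finite E'\<close>])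
    show "span_mod (jac_gens (g1 \<circ> tsq) (g2 \<circ> tsq)) E' (\<lambda>p. a p * fst p)" if "analytic_at0 a" for a
      using span_mod_t_mult[OF E(3) E(1) jac_gens_comp_tsq[OF assms(1,2)] \<open>finite E'\<close> _ _ that]
      by (simp add: E'_def mult.commute)
  qed (auto simp: E'_def set_jac_gens in_ideal_gen_self)
  ultimately show ?thesis unfolding finite_codim_iff_span_mod by blast
qed

lemma proper_jac_gens_comp_tsq:
  assumes "analytic_at0 g1" "analytic_at0 g2" "g1 (0, 0, 0) = 0" "g2 (0, 0, 0) = 0"
    and "proper_ideal (jac_gens g1 g2)"
  shows "proper_ideal (jac_gens (g1 \<circ> tsq) (g2 \<circ> tsq))"
proof (rule proper_idealI)
  have "jac_minor g1 g2 1 2 (0, 0, 0) = 0"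
    using assms(5) analytic_at0_jac_minor_x[OF assms(1,2)]
    by (intro proper_ideal_gen_vanishes) (auto simp: set_jac_gens)
  moreover have "jac_minor (g1 \<circ> tsq) (g2 \<circ> tsq) 0 l (0, 0, 0) = 0" if "l \<noteq> 0" for l
    using germ_eq_at0[OF jac_minor_t_comp_tsq[OF assms(1,2) that]] by simp
  ultimately show "\<forall>w\<in>set (jac_gens (g1 \<circ> tsq) (g2 \<circ> tsq)). w (0, 0, 0) = 0"
    using assms(3,4) jac_minor_x_comp_tsq[of 1 2 g1 g2 "(0, 0, 0)"] by (simp add: set_jac_gens)
qed

theorem proposition4p4:
  fixes g1 g2 :: "real \<times> real \<times> real \<Rightarrow> real"
  assumes "analytic_at0 g1" and "analytic_at0 g2"
    and "g1 (0, 0, 0) = 0" and "g2 (0, 0, 0) = 0"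
    and "curve_ais [g1, g2]"
    and "finite_codim [(\<lambda>(t, x1, x2). t), g1, g2]"
  shows "finite_codim [(\<lambda>(t, x1, x2). t), (\<lambda>(t, x1, x2). g1 (t ^ 2, x1, x2)), (\<lambda>(t, x1, x2). g2 (t ^ 2, x1, x2))]
    \<and> curve_ais [(\<lambda>(t, x1, x2). g1 (t ^ 2, x1, x2)), (\<lambda>(t, x1, x2). g2 (t ^ 2, x1, x2))]"
proof -
  have comp_tsq: "(\<lambda>(t, x1, x2). g (t ^ 2, x1, x2)) = g \<circ> tsq" for g :: "real \<times> real \<times> real \<Rightarrow> real"
    by (auto simp: fun_eq_iff)
  have t: "(\<lambda>(t, x1, x2). t) = (fst :: real \<times> real \<times> real \<Rightarrow> real)"
    by (auto simp: fun_eq_iff)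
  have W: "proper_ideal (jac_gens g1 g2)" "finite_codim (jac_gens g1 g2)"
    using assms(5) unfolding curve_ais_iff by simp_all
  have T': "finite_codim [fst, g1 \<circ> tsq, g2 \<circ> tsq]"
    using finite_codim_t_comp_tsq[OF assms(1,2) assms(6)[unfolded t]] .
  show ?thesis
    unfolding comp_tsq t curve_ais_iff
    using T' finite_codim_jac_gens_comp_tsq[OF assms(1,2) W(2) T']
      proper_jac_gens_comp_tsq[OF assms(1-4) W(1)] by simp
qed

end
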